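(* Let $f\in\mathscr H$, let $s\in\mathbb C$ with $-s\in\operatorname{Reg}(f)$, let $\mathbf h\in\mathbb R^N_{>0}$ and $\mathbf i\in\mathbb Z^N_{\ge0}$, and put $|\mathbf i|=i_1+\cdots+i_N$. Then $-s-|\mathbf i|\in\operatorname{Reg}(f)$ and for every $t>0$ $$(-\Delta_{\mathbf h})^{\mathbf i}f(-s,t)=s(s+1)\cdots(s+|\mathbf i|-1)\int_{[0,h_1]^{i_1}\times\cdots\times[0,h_N]^{i_N}}f\big(-s-|\mathbf i|,\,t+u_1+\cdots+u_{|\mathbf i|}\big)\,du_1\cdots du_{|\mathbf i|},$$ where $\Delta_{\mathbf h}^{\mathbf i}$ acts in the variable $t$. In particular, for every $n\in\mathbb Z_{\ge0}\cap\operatorname{Reg}(f)$, the function $t\mapsto f(n,t)$ is a polynomial in $t$ of degree at most $n$.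
   Context: For functions $g$ on $(0,\infty)$ and $h>0$: $\Delta_hg(t)=g(t+h)-g(t)$; for $\mathbf h\in\mathbb R^N_{>0}$, $\mathbf i\in\mathbb Z^N_{\ge0}$, $\Delta_{\mathbf h}^{\mathbf i}=\Delta_{h_1}^{i_1}\cdots\Delta_{h_N}^{i_N}$. $\mathscr D(\mathscr L)$: measurable $\varphi:(0,\infty)\to\mathbb C$ integrable on every $(0,R)$ with $\int_0^\infty e^{-su}|\varphi(u)|du<\infty$ for all $\operatorname{Re}(s)>0$; $\mathscr L(\varphi)(t)=\int_0^\infty e^{-tu}\varphi(u)du$. $\mathscr D^\iota(\mathscr L)$: those $\varphi\in\mathscr D(\mathscr L)$ with $|\varphi|\le\psi$ for some non-decreasing (non-negative) $\psi\in\mathscr D(\mathscr L)$. For a function $f(s,t)$ on $(\mathbb C\setminus S)\times(0,\infty)$, with $S$ a closed discrete set and $s\mapsto f(s,t)$ holomorphic on $\mathbb C\setminus S$ for each $t$, let $\operatorname{Reg}(f)$ be the set of $s\in\mathbb C$ at which $s\mapsto f(s,t)$ is holomorphic (after removing removable singularities) for every $t>0$. The space $\mathscr H$ consists of such $f$ satisfying: (a) $\mathbb C\setminus\operatorname{Reg}(f)$ is discrete; (b) for $s\in\operatorname{Reg}(f)$, $t\mapsto f(s,t)$ is differentiable on $(0,\infty)$; (c) $\operatorname{Reg}(f)\subseteq\operatorname{Reg}(\partial f)$, where $\partial f(s,t)=\frac{\partial}{\partial t}f(s,t)$; (d) $f(-1,t)=\mathscr L(\varphi)(t)$ for some $\varphi\in\mathscr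 D^\iota(\mathscr L)$; (e) $f(-s,t)=\mathscr L\big(\varphi(u)u^{s-1}/\Gamma(s)\big)(t)$ for all $s$ with $\operatorname{Re}(s)\ge1$ and all $t>0$. *)

theory Defs
  imports "HOL-Analysis.Analysis" "HOL-Computational_Algebra.Polynomial"
begin

definition discrete_set :: "complex set \<Rightarrow> bool" where
  "discrete_set S \<longleftrightarrow> (\<forall>z\<in>S. \<exists>e>0. \<forall>w\<in>S. dist w z < e \<longrightarrow> w = z)"

text \<open>Reg(f): points s such that, for every t > 0, z \<mapsto> f z t is holomorphic at s
  after removing a removable singularity (only values on a punctured neighbourhood matter).\<close>
definition Reg :: "(complex \<Rightarrow> real \<Rightarrow> complex) \<Rightarrow> complex set" where
  "Reg f = {s. \<forall>t>0. \<exists>e>0. \<exists>g. g holomorphic_on ball s e \<and>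
                 (\<forall>z\<in>ball s e - {s}. f z t = g z)}"

definition fR :: "(complex \<Rightarrow> real \<Rightarrow> complex) \<Rightarrow> complex \<Rightarrow> real \<Rightarrow> complex" where
  "fR f s t = Lim (at s) (\<lambda>z. f z t)"

definition pdt :: "(complex \<Rightarrow> real \<Rightarrow> complex) \<Rightarrow> complex \<Rightarrow> real \<Rightarrow> complex" where
  "pdt f z t = vector_derivative (\<lambda>\<tau>. f z \<tau>) (at t)"

definition Laplace :: "(real \<Rightarrow> complex) \<Rightarrow> real \<Rightarrow> complex" where
  "Laplace \<phi> t = (LINT u:{0<..}|lborel. complex_of_real (exp (- t * u)) * \<phi> u)"

definition DL :: "(real \<Rightarrow> complex) \<Rightarrow> bool" where
  "DL \<phi> \<longleftrightarrow> set_borel_measurable lborel {0<..} \<phi>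
     \<and> (\<forall>R>0. set_integrable lborel {0<..<R} \<phi>)
     \<and> (\<forall>s::complex. Re s > 0 \<longrightarrow>
          set_integrable lborel {0<..} (\<lambda>u. exp (- s * complex_of_real u) * complex_of_real (norm (\<phi> u))))"

definition DLi :: "(real \<Rightarrow> complex) \<Rightarrow> bool" where
  "DLi \<phi> \<longleftrightarrow> DL \<phi> \<and> (\<exists>\<psi>::real \<Rightarrow> real. mono_on {0<..} \<psi> \<and> (\<forall>u>0. 0 \<le> \<psi> u)
       \<and> DL (\<lambda>u. complex_of_real (\<psi> u)) \<and> (\<forall>u>0. norm (\<phi> u) \<le> \<psi> u))"

text \<open>Membership in the space H, with S the closed discrete exceptional set
  (f is only meaningful on (C - S) x (0,oo)).\<close>
definition inH :: "complex set \<Rightarrow> (complex \<Rightarrow> real \<Rightarrow> complex) \<Rightarrow> bool" where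
  "inH S f \<longleftrightarrow> closed S \<and> discrete_set S
     \<and> (\<forall>t>0. (\<lambda>z. f z t) holomorphic_on (- S))
     \<and> discrete_set (- Reg f)
     \<and> (\<forall>s\<in>Reg f. \<forall>t>0. (\<lambda>\<tau>. fR f s \<tau>) differentiable (at t))
     \<and> Reg f \<subseteq> Reg (pdt f)
     \<and> (\<exists>\<phi>. DLi \<phi> \<and> - 1 \<notin> S \<and> (\<forall>t>0. f (- 1) t = Laplace \<phi> t)
          \<and> (\<forall>s. Re s \<ge> 1 \<longrightarrow> - s \<notin> S \<and> (\<forall>t>0. f (- s) t =
                 Laplace (\<lambda>u. \<phi> u * (complex_of_real u) powr (s - 1) / Gamma s) t)))"

definition negdiff :: "real \<Rightarrow> (real \<Rightarrow> complex) \<Rightarrow> real \<Rightarrow> complex" where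
  "negdiff h g t = - (g (t + h) - g t)"

text \<open>(-Delta_h)^i for multi-indices given as lists hs = [h_1..h_N], is = [i_1..i_N].\<close>
fun negdiff_multi :: "real list \<Rightarrow> nat list \<Rightarrow> (real \<Rightarrow> complex) \<Rightarrow> real \<Rightarrow> complex" where
  "negdiff_multi (h # hs) (i # ks) g = (negdiff h ^^ i) (negdiff_multi hs ks g)"
| "negdiff_multi _ _ g = g"

text \<open>Side lengths of the box [0,h_1]^{i_1} x ... x [0,h_N]^{i_N}, one per coordinate.\<close>
definition box_sides :: "real list \<Rightarrow> nat list \<Rightarrow> real list" where
  "box_sides hs ks = concat (map (\<lambda>(h, i). replicate i h) (zip hs ks))"

end

theory Submission
  imports Defs "HOL-Complex_Analysis.Complex_Analysis" "HOL-Real_Asymp.Real_Asymp"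
begin

text \<open>On the open connected set \<open>Omega = - (S + \<nat>)\<close>, \<open>f(z,\<cdot>)\<close> has the Taylor expansion
  \<open>f(z,t) = \<Sum>\<^sub>k (t - t\<^sub>0)\<^sup>k / k! \<cdot> z(z-1)\<cdots>(z-k+1) \<cdot> f(z-k,t\<^sub>0)\<close> for \<open>\<bar>t - t\<^sub>0\<bar> < t\<^sub>0\<close>.
  For \<open>Re z \<le> -1\<close> this is the exponential series integrated termwise against the Laplace
  representation; the right-hand side is holomorphic on \<open>Omega\<close>, because from some index on all
  coefficients are Laplace moments of \<open>\<phi>\<close>, uniformly bounded on compact sets; so the identity
  theorem extends the expansion to \<open>Omega\<close>. Hence \<open>\<partial>\<^sub>t f(z,t) = z f(z-1,t)\<close> on \<open>Omega\<close>.
  At a regular point \<open>z\<^sub>0\<close>, \<open>f(z\<^sub>0,t)\<close> is a Cauchy integral over a circle in \<open>Omega\<close>; integrating the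
  expansion termwise gives \<open>\<partial>\<^sub>t f(z\<^sub>0,t) = z\<^sub>0 f(z\<^sub>0-1,t)\<close> and shows that \<open>z\<^sub>0 - 1\<close> is regular too.
  By the fundamental theorem of calculus each application of \<open>-\<Delta>\<^sub>h\<close> then becomes an integration
  over \<open>[0,h]\<close> times one more factor of the Pochhammer symbol, and Fubini turns the iterated
  integral into the integral over the box. For \<open>n \<in> \<nat>\<close>, the recursion
  \<open>\<partial>\<^sub>t f(n,\<cdot>) = n f(n-1,\<cdot>)\<close>, which ends with \<open>\<partial>\<^sub>t f(0,\<cdot>) = 0\<close>, makes \<open>f(n,\<cdot>)\<close> a polynomial
  of degree at most \<open>n\<close>.\<close>

lemma powr_le_const_mult_exp:
  fixes a c :: real assumes "c > 0" "a \<ge> 0"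
  obtains K where "K > 0" "\<And>u. u > 0 \<Longrightarrow> u powr a \<le> K * exp (c * u)"
proof -
  have "((\<lambda>u. u powr a / exp (c*u)) \<longlongrightarrow> 0) at_top" using assms by real_asymp
  then have "eventually (\<lambda>u. u powr a / exp (c*u) < 1) at_top" by (rule order_tendstoD) simp
  then obtain U where U: "\<And>u. u \<ge> U \<Longrightarrow> u powr a / exp (c*u) < 1"
    by (auto simp: eventually_at_top_linorder)
  define K where "K = max U 1 powr a + 1"
  have K1: "K \<ge> 1" unfolding K_def by simp
  show ?thesis
  proof (rule that[of K])
    show "K > 0" using K1 by simp
    fix u :: real assume u: "u > 0"
    show "u powr a \<le> K * exp (c*u)"
    proof (cases "u \<ge> U")
      case True
      then have "u powr a < exp (c*u)" using U[OF True] by (simp add: divide_less_eq)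
      also have "\<dots> \<le> K * exp (c*u)" using K1 by simp
      finally show ?thesis by simp
    next
      case False
      have "u powr a \<le> max U 1 powr a" using False u assms by (intro powr_mono2) auto
      also have "\<dots> \<le> K" unfolding K_def by simp
      also have "\<dots> \<le> K * exp (c*u)" using K1 assms u by simp
      finally show ?thesis .
    qed
  qed
qed

lemma powr_le_one_plus_powr: "u > 0 \<Longrightarrow> 0 \<le> a \<Longrightarrow> a \<le> b \<Longrightarrow> (u::real) powr a \<le> 1 + u powr b"
  by (cases "u \<le> 1") (auto intro: order_trans[OF powr_mono2[of a u 1]] order_trans[OF powr_mono])

lemma norm_of_real_powr: "u > 0 \<Longrightarrow> norm (complex_of_real u powr w) = u powr Re w"
  by (subst norm_powr_real_powr) auto

lemma sum_power_div_fact_le_exp: "(x::real) \<ge> 0 \<Longrightarrow> (\<Sum>k<n. x^k / fact k) \<le> exp x"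
  using sum_le_suminf[of "\<lambda>k. x^k /\<^sub>R fact k" "{..<n}"] exp_converges[of x]
  by (auto simp: sums_iff divide_inverse_commute)

lemma power_div_fact_le_exp: "(x::real) \<ge> 0 \<Longrightarrow> x^k / fact k \<le> exp x"
  using sum_power_div_fact_le_exp[of x "Suc k"] sum_nonneg[of "{..<k}" "\<lambda>j. x^j / fact j"] by simp

lemma power_div_fact_add_le:
  assumes "(x::real) \<ge> 0" shows "x^(m + j) / fact (m + j) \<le> x^m * (x^j / fact j)"
proof -
  have "x^(m + j) / fact (m + j) \<le> x^(m + j) / fact j"
    using assms by (intro divide_left_mono fact_mono) auto
  then show ?thesis by (simp add: power_add)
qed

lemma set_borel_measurable_mult:
  fixes g h :: "real \<Rightarrow> 'a::{second_countable_topology, real_normed_algebra}"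
  assumes "set_borel_measurable lborel A g" "h \<in> borel_measurable lborel"
  shows "set_borel_measurable lborel A (\<lambda>u. h u * g u)"
proof -
  have "(\<lambda>u. indicator A u *\<^sub>R (h u * g u)) = (\<lambda>u. h u * (indicator A u *\<^sub>R g u))"
    by (simp add: fun_eq_iff)
  moreover have "(\<lambda>u. h u * (indicator A u *\<^sub>R g u)) \<in> borel_measurable lborel"
    using assms unfolding set_borel_measurable_def by measurable
  ultimately show ?thesis unfolding set_borel_measurable_def by simp
qed

lemma set_borel_measurable_norm:
  fixes g :: "real \<Rightarrow> 'a::{second_countable_topology, real_normed_vector}"
  assumes "set_borel_measurable lborel A g"
  shows "set_borel_measurable lborel A (\<lambda>u. norm (g u))"
proof -
  have "(\<lambda>u. indicator A u *\<^sub>R norm (g u)) = (\<lambda>u. norm (indicator A u *\<^sub>R g u))"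
    by (simp add: fun_eq_iff indicator_def)
  moreover have "(\<lambda>u. norm (indicator A u *\<^sub>R g u)) \<in> borel_measurable lborel"
    using assms unfolding set_borel_measurable_def by measurable
  ultimately show ?thesis unfolding set_borel_measurable_def by simp
qed

section \<open>Laplace transforms\<close>

lemma set_integral_nonneg_real: "(\<And>u. u \<in> A \<Longrightarrow> 0 \<le> g u) \<Longrightarrow> 0 \<le> (LINT u:A|M. (g u :: real))"
  unfolding set_lebesgue_integral_def
  by (rule Bochner_Integration.integral_nonneg) (auto simp: indicator_def)

lemma Laplace_cong: "(\<And>u. u > 0 \<Longrightarrow> g u = h u) \<Longrightarrow> Laplace g t = Laplace h t"
  unfolding Laplace_def by (rule set_lebesgue_integral_cong) auto

lemma Laplace_cmult: "Laplace (\<lambda>u. c * g u) t = c * Laplace g t"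
  unfolding Laplace_def by (simp add: mult.left_commute)

lemma set_integrable_Laplace_integrand:
  fixes g :: "real \<Rightarrow> complex" and W :: "real \<Rightarrow> real"
  assumes meas: "set_borel_measurable lborel {0<..} g"
    and int: "set_integrable lborel {0<..} (\<lambda>u. exp (- t * u) * W u)"
    and le: "\<And>u. u > 0 \<Longrightarrow> norm (g u) \<le> W u"
  shows "set_integrable lborel {0<..} (\<lambda>u. complex_of_real (exp (- t * u)) * g u)"
proof (rule set_integrable_bound[OF int])
  show "set_borel_measurable lborel {0<..} (\<lambda>u. complex_of_real (exp (- t * u)) * g u)"
    by (rule set_borel_measurable_mult[OF meas]) measurable
  show "AE u in lborel. u \<in> {0<..} \<longrightarrow>
      norm (complex_of_real (exp (- t * u)) * g u) \<le> norm (exp (- t * u) * W u)"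
    using le by (intro AE_I2) (auto simp: norm_mult intro!: mult_left_mono order_trans[OF _ abs_ge_self])
qed

lemma norm_Laplace_le:
  fixes g :: "real \<Rightarrow> complex" and W :: "real \<Rightarrow> real"
  assumes meas: "set_borel_measurable lborel {0<..} g"
    and int: "set_integrable lborel {0<..} (\<lambda>u. exp (- t * u) * W u)"
    and le: "\<And>u. u > 0 \<Longrightarrow> norm (g u) \<le> W u"
  shows "norm (Laplace g t) \<le> (LINT u:{0<..}|lborel. exp (- t * u) * W u)"
proof -
  note gint = set_integrable_Laplace_integrand[OF assms]
  have "norm (Laplace g t) \<le> (LINT u:{0<..}|lborel. norm (complex_of_real (exp (- t * u)) * g u))"
    unfolding Laplace_def by (rule set_integral_norm_bound[OF gint])
  also have "\<dots> \<le> (LINT u:{0<..}|lborel. exp (- t * u) * W u)"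
    using le by (intro set_integral_mono[OF set_integrable_norm[OF gint] int])
      (auto simp: norm_mult intro!: mult_left_mono)
  finally show ?thesis .
qed

lemma set_integrable_Laplace_moment:
  fixes w :: "real \<Rightarrow> real"
  assumes int: "set_integrable lborel {0<..} (\<lambda>u. exp (- (t - \<delta>) * u) * w u)"
    and nonneg: "\<And>u. u > 0 \<Longrightarrow> 0 \<le> w u" and "\<delta> \<ge> 0"
  shows "set_integrable lborel {0<..} (\<lambda>u. exp (- t * u) * w u * ((\<delta> * u) ^ j / fact j))"
proof (rule set_integrable_bound[OF int])
  have "set_borel_measurable lborel {0<..} (\<lambda>u. exp (- (t - \<delta>) * u) * w u)"
    using int unfolding set_integrable_def set_borel_measurable_def by (rule borel_measurable_integrable)
  then have "set_borel_measurable lborel {0<..}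
      (\<lambda>u. (exp (- \<delta> * u) * ((\<delta> * u) ^ j / fact j)) * (exp (- (t - \<delta>) * u) * w u))"
    by (rule set_borel_measurable_mult) measurable
  then show "set_borel_measurable lborel {0<..} (\<lambda>u. exp (- t * u) * w u * ((\<delta> * u) ^ j / fact j))"
    by (simp add: mult_exp_exp algebra_simps)
  have "exp (- t * u) * w u * ((\<delta> * u) ^ j / fact j) \<le> exp (- (t - \<delta>) * u) * w u" if "u > 0" for u
  proof -
    have "exp (- t * u) * w u * ((\<delta> * u) ^ j / fact j) \<le> exp (- t * u) * w u * exp (\<delta> * u)"
      using that assms by (intro mult_left_mono power_div_fact_le_exp) auto
    then show ?thesis by (simp add: mult_exp_exp algebra_simps)
  qed
  then show "AE u in lborel. u \<in> {0<..} \<longrightarrow> norm (exp (- t * u) * w u * ((\<delta> * u) ^ j / fact j))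
      \<le> norm (exp (- (t - \<delta>) * u) * w u)"
    using nonneg \<open>\<delta> \<ge> 0\<close> by (intro AE_I2) auto
qed

lemma summable_Laplace_moments:
  fixes w :: "real \<Rightarrow> real"
  assumes int: "set_integrable lborel {0<..} (\<lambda>u. exp (- (t - \<delta>) * u) * w u)"
    and nonneg: "\<And>u. u > 0 \<Longrightarrow> 0 \<le> w u" and "\<delta> \<ge> 0"
  shows "summable (\<lambda>j. LINT u:{0<..}|lborel. exp (- t * u) * w u * ((\<delta> * u) ^ j / fact j))"
proof (rule summableI_nonneg_bounded)
  note mint = set_integrable_Laplace_moment[OF assms]
  show "0 \<le> (LINT u:{0<..}|lborel. exp (- t * u) * w u * ((\<delta> * u) ^ j / fact j))" for j
    using nonneg \<open>\<delta> \<ge> 0\<close> by (intro set_integral_nonneg_real) simp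
  fix n
  have "(\<Sum>j<n. LINT u:{0<..}|lborel. exp (- t * u) * w u * ((\<delta> * u) ^ j / fact j))
      = (LINT u:{0<..}|lborel. exp (- t * u) * w u * (\<Sum>j<n. (\<delta> * u) ^ j / fact j))"
    using mint unfolding set_lebesgue_integral_def set_integrable_def
    by (simp add: Bochner_Integration.integral_sum[symmetric] sum_distrib_left sum_distrib_right)
  also have "\<dots> \<le> (LINT u:{0<..}|lborel. exp (- (t - \<delta>) * u) * w u)"
  proof (rule set_integral_mono[OF _ int])
    show "set_integrable lborel {0<..} (\<lambda>u. exp (- t * u) * w u * (\<Sum>j<n. (\<delta> * u) ^ j / fact j))"
      unfolding set_integrable_def sum_distrib_left scaleR_sum_right
      by (intro Bochner_Integration.integrable_sum) (use mint in \<open>simp add: set_integrable_def\<close>)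
    fix u :: real assume "u \<in> {0<..}"
    then have "exp (- t * u) * w u * (\<Sum>j<n. (\<delta> * u) ^ j / fact j) \<le> exp (- t * u) * w u * exp (\<delta> * u)"
      using nonneg \<open>\<delta> \<ge> 0\<close> by (intro mult_left_mono sum_power_div_fact_le_exp) auto
    then show "exp (- t * u) * w u * (\<Sum>j<n. (\<delta> * u) ^ j / fact j) \<le> exp (- (t - \<delta>) * u) * w u"
      by (simp add: mult_exp_exp algebra_simps)
  qed
  finally show "(\<Sum>j<n. LINT u:{0<..}|lborel. exp (- t * u) * w u * ((\<delta> * u) ^ j / fact j))
      \<le> (LINT u:{0<..}|lborel. exp (- (t - \<delta>) * u) * w u)" .
qed

lemma sums_exp_Taylor_shift:
  "(\<lambda>k. complex_of_real (exp (- t0 * u) * (((t0 - t) * u) ^ k / fact k)) * c)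
     sums (complex_of_real (exp (- t * u)) * c)"
proof -
  have "(\<lambda>k. complex_of_real (exp (- t0 * u) * (((t0 - t) * u) ^ k / fact k)) * c)
      sums (complex_of_real (exp (- t0 * u) * exp ((t0 - t) * u)) * c)"
    using exp_converges[of "(t0 - t) * u"]
    by (intro sums_mult2 sums_of_real sums_mult) (simp add: divide_inverse_commute)
  then show ?thesis by (simp add: mult_exp_exp algebra_simps)
qed

lemma set_integrable_Laplace_Taylor_term:
  fixes \<psi> :: "real \<Rightarrow> complex"
  assumes meas: "set_borel_measurable lborel {0<..} \<psi>"
    and int: "set_integrable lborel {0<..} (\<lambda>u. exp (- (t0 - \<bar>t - t0\<bar>) * u) * norm (\<psi> u))"
  shows "set_integrable lborel {0<..}
           (\<lambda>u. complex_of_real (exp (- t0 * u) * (((t0 - t) * u) ^ k / fact k)) * \<psi> u)"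
proof -
  have "set_borel_measurable lborel {0<..} (\<lambda>u. complex_of_real (((t0 - t) * u) ^ k / fact k) * \<psi> u)"
    by (rule set_borel_measurable_mult[OF meas]) measurable
  then have "set_integrable lborel {0<..}
      (\<lambda>u. complex_of_real (exp (- t0 * u)) * (complex_of_real (((t0 - t) * u) ^ k / fact k) * \<psi> u))"
  proof (rule set_integrable_Laplace_integrand)
    show "set_integrable lborel {0<..}
        (\<lambda>u. exp (- t0 * u) * (norm (\<psi> u) * ((\<bar>t - t0\<bar> * u) ^ k / fact k)))"
      using set_integrable_Laplace_moment[OF int] by (simp add: mult.assoc)
    show "norm (complex_of_real (((t0 - t) * u) ^ k / fact k) * \<psi> u)
        \<le> norm (\<psi> u) * ((\<bar>t - t0\<bar> * u) ^ k / fact k)" if "u > 0" for u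
      unfolding norm_mult norm_of_real using that
      by (simp add: abs_mult power_abs power_mult_distrib abs_minus_commute ac_simps)
  qed
  then show ?thesis by (simp add: mult.assoc)
qed

lemma Laplace_Taylor_sums:
  fixes \<psi> :: "real \<Rightarrow> complex"
  assumes meas: "set_borel_measurable lborel {0<..} \<psi>"
    and int: "set_integrable lborel {0<..} (\<lambda>u. exp (- (t0 - \<bar>t - t0\<bar>) * u) * norm (\<psi> u))"
  shows "(\<lambda>k. complex_of_real ((t0 - t) ^ k / fact k) * Laplace (\<lambda>u. complex_of_real u ^ k * \<psi> u) t0)
           sums Laplace \<psi> t"
proof -
  define x where "x = \<bar>t - t0\<bar>"
  define F where "F k u = indicator {0<..} u *\<^sub>R
    (complex_of_real (exp (- t0 * u) * (((t0 - t) * u) ^ k / fact k)) * \<psi> u)" for k u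
  have "integrable lborel (F k)" for k
    using set_integrable_Laplace_Taylor_term[OF meas int] unfolding F_def set_integrable_def .
  moreover have normF: "norm (F k u) = indicator {0<..} u * (exp (- t0 * u) * norm (\<psi> u) * ((x * u) ^ k / fact k))"
    for k u
    unfolding F_def norm_scaleR norm_mult norm_of_real
    by (cases "u > 0") (simp_all add: x_def abs_mult power_abs power_mult_distrib abs_minus_commute ac_simps)
  moreover have "summable (\<lambda>k. LINT u|lborel. norm (F k u))"
    using summable_Laplace_moments[OF int[folded x_def]]
    by (simp add: normF x_def set_lebesgue_integral_def)
  moreover have "AE u in lborel. summable (\<lambda>k. norm (F k u))"
    using summable_exp_generic[of "x * u" for u]
    by (intro AE_I2) (simp add: normF summable_mult divide_inverse_commute)
  ultimately have "(\<lambda>k. LINT u|lborel. F k u) sums (LINT u|lborel. (\<Sum>k. F k u))"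
    by (intro sums_integral) auto
  moreover have "(LINT u|lborel. F k u)
      = complex_of_real ((t0 - t) ^ k / fact k) * Laplace (\<lambda>u. complex_of_real u ^ k * \<psi> u) t0" for k
    unfolding Laplace_def set_lebesgue_integral_def F_def
    by (simp add: power_mult_distrib ac_simps flip: integral_mult_right_zero)
  moreover have "(\<Sum>k. F k u) = indicator {0<..} u *\<^sub>R (complex_of_real (exp (- t * u)) * \<psi> u)" for u
    unfolding F_def by (rule sums_unique[symmetric], rule sums_scaleR_right, rule sums_exp_Taylor_shift)
  ultimately show ?thesis by (simp add: Laplace_def set_lebesgue_integral_def)
qed

section \<open>Complex-analytic tools\<close>

lemma has_vector_derivative_power_series:
  fixes c :: "nat \<Rightarrow> complex" and g :: "real \<Rightarrow> complex"
  assumes d: "\<delta> > 0" and sm: "summable (\<lambda>k. norm (c k) * \<delta>^k)"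
    and eq: "\<And>\<tau>. \<bar>\<tau> - t\<bar> < \<delta> \<Longrightarrow> g \<tau> = (\<Sum>k. c k * complex_of_real (\<tau> - t)^k)"
  shows "(g has_vector_derivative c 1) (at t)"
proof -
  define h where "h x = (\<Sum>k. c k * x^k)" for x :: complex
  have "summable (\<lambda>n. c n * complex_of_real \<delta> ^ n)"
    by (rule summable_norm_cancel) (use sm d in \<open>simp add: norm_mult norm_power\<close>)
  then have "(h has_field_derivative (\<Sum>n. diffs c n * 0^n)) (at 0)"
    unfolding h_def by (rule termdiffs_strong) (use d in simp)
  moreover have "(\<Sum>n. diffs c n * 0^n) = c 1" by (simp add: powser_zero diffs_def)
  ultimately have h': "(h has_field_derivative c 1) (at 0)" by simp
  have shift: "((\<lambda>\<tau>. complex_of_real (\<tau> - t)) has_vector_derivative 1) (at t)"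
  proof -
    have "((\<lambda>\<tau>. complex_of_real (\<tau> - t)) has_vector_derivative complex_of_real 1) (at t)"
      by (intro has_vector_derivative_of_real derivative_eq_intros) auto
    then show ?thesis by simp
  qed
  have "(h \<circ> (\<lambda>\<tau>. complex_of_real (\<tau> - t)) has_vector_derivative 1 * c 1) (at t)"
    by (rule field_vector_diff_chain_at[OF shift]) (use h' in simp)
  then have comp: "(h \<circ> (\<lambda>\<tau>. complex_of_real (\<tau> - t)) has_vector_derivative c 1) (at t)" by simp
  show ?thesis
  proof (rule has_vector_derivative_transform_within_open[OF comp, of "ball t \<delta>"])
    show "open (ball t \<delta>)" by simp
    show "t \<in> ball t \<delta>" using d by simp
    fix y assume "y \<in> ball t \<delta>"
    then have "\<bar>y - t\<bar> < \<delta>" by (simp add: dist_real_def abs_minus_commute)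
    then show "(h \<circ> (\<lambda>\<tau>. complex_of_real (\<tau> - t))) y = g y" using eq by (simp add: h_def)
  qed
qed

lemma Cauchy_integral_circlepath_punctured:
  assumes F: "F holomorphic_on ball z R - {z}" and lim: "(F \<longlongrightarrow> L) (at z)"
    and \<rho>: "0 < \<rho>" "\<rho> < R"
  shows "((\<lambda>u. F u / (u - z)) has_contour_integral (2 * of_real pi * \<i> * L)) (circlepath z \<rho>)"
proof -
  define H where "H y = (if y = z then L else F y)" for y
  have H: "H holomorphic_on ball z R"
    unfolding H_def by (rule removable_singularity[OF F open_ball lim])
  have "((\<lambda>u. H u / (u - z)) has_contour_integral (2 * of_real pi * \<i> * H z)) (circlepath z \<rho>)"
  proof (rule Cauchy_integral_circlepath)
    show "continuous_on (cball z \<rho>) H"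
      using \<rho> by (intro continuous_on_subset[OF holomorphic_on_imp_continuous_on[OF H]]) auto
    show "H holomorphic_on ball z \<rho>" using \<rho> by (intro holomorphic_on_subset[OF H]) auto
  qed (use \<rho> in simp)
  then have "((\<lambda>u. H u / (u - z)) has_contour_integral (2 * of_real pi * \<i> * L)) (circlepath z \<rho>)"
    by (simp add: H_def)
  then show ?thesis
    by (rule has_contour_integral_eq) (use \<rho> in \<open>auto simp: H_def path_image_circlepath\<close>)
qed

lemma sums_contour_integral_circlepath:
  assumes cont: "\<And>k. continuous_on (sphere z \<rho>) (F k)" and M: "summable M"
    and le: "\<And>k u. u \<in> sphere z \<rho> \<Longrightarrow> norm (F k u) \<le> M k" and \<rho>: "0 < \<rho>"
  shows "(\<lambda>k. contour_integral (circlepath z \<rho>) (F k))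
           sums contour_integral (circlepath z \<rho>) (\<lambda>u. \<Sum>k. F k u)"
proof -
  have int: "F k contour_integrable_on circlepath z \<rho>" for k
    using cont \<rho> by (intro contour_integrable_continuous_circlepath) (simp add: path_image_circlepath_nonneg)
  have "uniform_limit (sphere z \<rho>) (\<lambda>n u. \<Sum>k<n. F k u) (\<lambda>u. \<Sum>k. F k u) sequentially"
    by (rule Weierstrass_m_test[OF le M])
  moreover have "\<forall>\<^sub>F n in sequentially. (\<lambda>u. \<Sum>k<n. F k u) contour_integrable_on circlepath z \<rho>"
    using int by (intro always_eventually allI contour_integrable_sum) auto
  ultimately have "(\<lambda>n. contour_integral (circlepath z \<rho>) (\<lambda>u. \<Sum>k<n. F k u))
      \<longlonglongrightarrow> contour_integral (circlepath z \<rho>) (\<lambda>u. \<Sum>k. F k u)"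
    using \<rho> by (intro contour_integral_uniform_limit_circlepath(2)) (auto simp: path_image_circlepath_nonneg)
  then show ?thesis
    unfolding sums_def using int by (simp add: contour_integral_sum)
qed

lemma tendsto_fR:
  assumes "s \<in> Reg f" "t > 0"
  shows "((\<lambda>z. f z t) \<longlongrightarrow> fR f s t) (at s)"
proof -
  obtain e g where e: "e > 0" and g: "g holomorphic_on ball s e"
    and eq: "\<forall>z\<in>ball s e - {s}. f z t = g z"
    using assms unfolding Reg_def by blast
  have "isCont g s"
    using e by (intro continuous_on_interior[OF holomorphic_on_imp_continuous_on[OF g]]) auto
  moreover have "eventually (\<lambda>z. g z = f z t) (at s)"
    unfolding eventually_at using e eq by (intro exI[of _ e]) (auto simp: dist_commute)
  ultimately have "((\<lambda>z. f z t) \<longlongrightarrow> g s) (at s)"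
    unfolding isCont_def by (rule Lim_transform_eventually)
  moreover from this have "fR f s t = g s"
    unfolding fR_def by (intro tendsto_Lim) auto
  ultimately show ?thesis by simp
qed

lemma fR_eqI: "((\<lambda>z. f z t) \<longlongrightarrow> L) (at s) \<Longrightarrow> fR f s t = L"
  unfolding fR_def by (intro tendsto_Lim) auto

lemma RegI:
  assumes "\<And>t. t > 0 \<Longrightarrow>
    \<exists>e>0. (\<lambda>z. f z t) holomorphic_on ball s e - {s} \<and> (\<exists>L. ((\<lambda>z. f z t) \<longlongrightarrow> L) (at s))"
  shows "s \<in> Reg f"
  unfolding Reg_def
proof (intro CollectI allI impI)
  fix t :: real assume "t > 0"
  then obtain e L where e: "e > 0" and hol: "(\<lambda>z. f z t) holomorphic_on ball s e - {s}"
    and lim: "((\<lambda>z. f z t) \<longlongrightarrow> L) (at s)"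
    using assms by blast
  have "(\<lambda>z. if z = s then L else f z t) holomorphic_on ball s e"
    by (rule removable_singularity[OF hol open_ball lim])
  then show "\<exists>e>0. \<exists>g. g holomorphic_on ball s e \<and> (\<forall>z\<in>ball s e - {s}. f z t = g z)"
    using e by (intro exI[of _ e] conjI exI[of _ "\<lambda>z. if z = s then L else f z t"]) auto
qed

section \<open>Antiderivatives of polynomials\<close>

lemma pderiv_antiderivative:
  fixes p :: "'a::field_char_0 poly"
  shows "pderiv (\<Sum>i\<le>degree p. monom (coeff p i / of_nat (Suc i)) (Suc i)) = p"
proof -
  have "pderiv (\<Sum>i\<le>degree p. monom (coeff p i / of_nat (Suc i)) (Suc i))
      = (\<Sum>i\<le>degree p. monom (coeff p i) i)"
    using higher_pderiv_sum[of 1 "\<lambda>i. monom (coeff p i / of_nat (Suc i)) (Suc i)" "{..degree p}"]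
    by (simp add: pderiv_monom del: of_nat_Suc)
  then show ?thesis by (simp add: poly_as_sum_of_monoms)
qed

lemma poly_of_real_antiderivative:
  fixes g :: "real \<Rightarrow> complex" and p :: "complex poly"
  assumes D: "\<And>t. t > 0 \<Longrightarrow> (g has_vector_derivative poly p (of_real t)) (at t)"
  shows "\<exists>q. pderiv q = p \<and> (\<forall>t>0. g t = poly q (of_real t))"
proof -
  define r where "r = (\<Sum>i\<le>degree p. monom (coeff p i / of_nat (Suc i)) (Suc i))"
  have r: "pderiv r = p" unfolding r_def by (rule pderiv_antiderivative)
  have "((\<lambda>t. g t - poly r (of_real t)) has_vector_derivative 0) (at t within {0<..})" if "t \<in> {0<..}" for t
  proof -
    have "((\<lambda>t. poly r (of_real t)) has_vector_derivative 1 * poly p (of_real t)) (at t)"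
      using field_vector_diff_chain_at[of of_real 1 t "poly r", OF _ poly_DERIV[of r]]
        has_vector_derivative_of_real[of "\<lambda>x. x" 1 "at t"]
      by (simp add: r o_def DERIV_ident)
    then have "((\<lambda>t. g t - poly r (of_real t)) has_vector_derivative 0) (at t)"
      using D[of t] that by (auto dest: has_vector_derivative_diff)
    then show ?thesis by (rule has_vector_derivative_at_within)
  qed
  then obtain c where c: "\<And>t. t \<in> {0<..} \<Longrightarrow> g t - poly r (of_real t) = c"
    using has_vector_derivative_zero_constant[of "{0<..}" "\<lambda>t. g t - poly r (of_real t)"] by auto
  have "pderiv (r + [:c:]) = p" by (simp add: pderiv_add r)
  moreover have "g t = poly (r + [:c:]) (of_real t)" if "t > 0" for t
    using c[of t] that by (simp add: algebra_simps)
  ultimately show ?thesis by blast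
qed

section \<open>Iterated differences and iterated integrals\<close>

text \<open>\<open>nested_integral [h\<^sub>1, \<dots>, h\<^sub>n] g t\<close> is the iterated integral of \<open>g (t + v\<^sub>1 + \<dots> + v\<^sub>n)\<close>
  over \<open>v\<^sub>i \<in> [0, h\<^sub>i]\<close>, with the \<open>v\<^sub>1\<close>-integral innermost.\<close>

fun nested_integral :: "real list \<Rightarrow> (real \<Rightarrow> complex) \<Rightarrow> real \<Rightarrow> complex" where
  "nested_integral [] g t = g t"
| "nested_integral (h # hs) g t = nested_integral hs (\<lambda>\<tau>. integral {0..h} (\<lambda>v. g (\<tau> + v))) t"

lemma nested_integral_shift: "nested_integral L g (t + c) = nested_integral L (\<lambda>\<tau>. g (\<tau> + c)) t"
  by (induction L arbitrary: g) (simp_all add: ac_simps)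

lemma nested_integral_cmult: "nested_integral L (\<lambda>\<tau>. c * g \<tau>) t = c * nested_integral L g t"
  by (induction L arbitrary: g) simp_all

lemma nested_integral_cong:
  assumes "\<And>\<tau>. \<tau> \<ge> t0 \<Longrightarrow> g1 \<tau> = g2 \<tau>" "\<forall>x\<in>set L. x \<ge> 0" "t \<ge> t0"
  shows "nested_integral L g1 t = nested_integral L g2 t"
  using assms
proof (induction L arbitrary: g1 g2 t)
  case (Cons h L)
  have "integral {0..h} (\<lambda>v. g1 (\<tau> + v)) = integral {0..h} (\<lambda>v. g2 (\<tau> + v))" if "\<tau> \<ge> t0" for \<tau>
  proof (rule integral_cong)
    fix v assume "v \<in> {0..h}"
    then show "g1 (\<tau> + v) = g2 (\<tau> + v)" using that by (intro Cons.prems(1)) simp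
  qed
  then have "nested_integral L (\<lambda>\<tau>. integral {0..h} (\<lambda>v. g1 (\<tau> + v))) t
      = nested_integral L (\<lambda>\<tau>. integral {0..h} (\<lambda>v. g2 (\<tau> + v))) t"
    by (rule Cons.IH) (use Cons.prems in simp_all)
  then show ?case by simp
qed simp

lemma continuous_on_integral_shift:
  fixes g :: "real \<Rightarrow> complex"
  assumes g: "continuous_on A g" and T: "\<And>\<tau> v. \<tau> \<in> T \<Longrightarrow> v \<in> {0..h} \<Longrightarrow> \<tau> + v \<in> A"
  shows "continuous_on T (\<lambda>\<tau>. integral {0..h} (\<lambda>v. g (\<tau> + v)))"
proof -
  have "continuous_on (T \<times> {0..h}) (\<lambda>p. fst p + snd p)" by (intro continuous_intros)
  moreover have "(\<lambda>p. fst p + snd p) ` (T \<times> {0..h}) \<subseteq> A" using T by auto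
  ultimately have "continuous_on (T \<times> {0..h}) (g \<circ> (\<lambda>p. fst p + snd p))"
    using g by (intro continuous_on_compose) (auto intro: continuous_on_subset)
  then have "continuous_on (T \<times> cbox 0 h) (\<lambda>(\<tau>, v). g (\<tau> + v))"
    by (simp add: o_def case_prod_beta)
  then have "continuous_on T (\<lambda>\<tau>. integral (cbox 0 h) (\<lambda>v. g (\<tau> + v)))"
    by (rule integral_continuous_on_param)
  then show ?thesis by simp
qed

lemma nested_integral_diff:
  assumes "continuous_on {t0..} g1" "continuous_on {t0..} g2" "\<forall>x\<in>set L. x \<ge> 0" "t \<ge> t0"
  shows "nested_integral L (\<lambda>\<tau>. g1 \<tau> - g2 \<tau>) t = nested_integral L g1 t - nested_integral L g2 t"
  using assms
proof (induction L arbitrary: g1 g2 t)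
  case (Cons h L)
  have h: "h \<ge> 0" using Cons.prems by simp
  define I where "I g \<tau> = integral {0..h} (\<lambda>v. g (\<tau> + v))" for g :: "real \<Rightarrow> complex" and \<tau>
  have I_cont: "continuous_on {t0..} (I g)" if "continuous_on {t0..} g" for g :: "real \<Rightarrow> complex"
    unfolding I_def by (rule continuous_on_integral_shift[OF that]) auto
  have "integral {0..h} (\<lambda>v. g1 (\<tau> + v) - g2 (\<tau> + v)) = I g1 \<tau> - I g2 \<tau>" if "\<tau> \<ge> t0" for \<tau>
  proof -
    have int: "(\<lambda>v. g (\<tau> + v)) integrable_on {0..h}" if "continuous_on {t0..} g" for g :: "real \<Rightarrow> complex"
    proof (rule integrable_continuous_interval, rule continuous_on_compose2[OF that])
      show "(\<lambda>v. \<tau> + v) ` {0..h} \<subseteq> {t0..}" using \<open>\<tau> \<ge> t0\<close> by auto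
    qed (intro continuous_intros)
    show ?thesis unfolding I_def by (rule integral_diff[OF int int]) (use Cons.prems in auto)
  qed
  then have "nested_integral (h # L) (\<lambda>\<tau>. g1 \<tau> - g2 \<tau>) t = nested_integral L (\<lambda>\<tau>. I g1 \<tau> - I g2 \<tau>) t"
    using Cons.prems by (simp add: I_def[symmetric]) (rule nested_integral_cong[of t0]; simp)
  also have "\<dots> = nested_integral L (I g1) t - nested_integral L (I g2) t"
    by (rule Cons.IH[OF I_cont I_cont]) (use Cons.prems in auto)
  finally show ?case by (simp add: I_def[abs_def])
qed simp

lemma integral_shift_has_vector_derivative:
  fixes g g' :: "real \<Rightarrow> complex"
  assumes h: "h \<ge> 0" and D: "\<And>x. x \<in> {0..h} \<Longrightarrow> (g has_vector_derivative g' (t + x)) (at (t + x))"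
  shows "g (t + h) - g t = integral {0..h} (\<lambda>v. g' (t + v))"
proof -
  have "((\<lambda>v. g' (t + v)) has_integral (g (t + h) - g (t + 0))) {0..h}"
  proof (rule fundamental_theorem_of_calculus[OF h])
    fix x assume x: "x \<in> {0..h}"
    have "((\<lambda>v. t + v) has_vector_derivative 1) (at x)"
      by (auto intro!: derivative_eq_intros)
    from vector_diff_chain_within[OF this D[OF x, THEN has_vector_derivative_at_within]]
    have "((\<lambda>v. g (t + v)) has_vector_derivative g' (t + x)) (at x)" by (simp add: o_def)
    then show "((\<lambda>v. g (t + v)) has_vector_derivative g' (t + x)) (at x within {0..h})"
      by (rule has_vector_derivative_at_within)
  qed
  then show ?thesis by (simp add: integral_unique)
qed

lemma negdiff_nested_integral:
  fixes gA gB :: "real \<Rightarrow> complex"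
  assumes D: "\<And>\<tau>. \<tau> > 0 \<Longrightarrow> (gA has_vector_derivative c * gB \<tau>) (at \<tau>)"
    and cA: "continuous_on {0<..} gA"
    and L: "\<forall>x\<in>set L. x \<ge> 0" and t: "t > 0" and h: "h > 0"
  shows "negdiff h (nested_integral L gA) t = - c * nested_integral (h # L) gB t"
proof -
  have cont: "continuous_on {t..} gA" "continuous_on {t..} (\<lambda>\<tau>. gA (\<tau> + h))"
    using t h by (auto intro: continuous_on_subset[OF cA]
      intro!: continuous_on_compose2[OF cA, of _ "\<lambda>\<tau>. \<tau> + h"] continuous_intros)
  have "negdiff h (nested_integral L gA) t = - nested_integral L (\<lambda>\<tau>. gA (\<tau> + h) - gA \<tau>) t"
    unfolding negdiff_def nested_integral_shift nested_integral_diff[OF cont(2,1) L order_refl] ..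
  also have "\<dots> = - nested_integral L (\<lambda>\<tau>. c * integral {0..h} (\<lambda>v. gB (\<tau> + v))) t"
  proof (intro arg_cong[where f = uminus] nested_integral_cong[OF _ L order_refl])
    fix \<tau> assume "\<tau> \<ge> t"
    then have "gA (\<tau> + h) - gA \<tau> = integral {0..h} (\<lambda>v. c * gB (\<tau> + v))"
      using t h by (intro integral_shift_has_vector_derivative D) auto
    then show "gA (\<tau> + h) - gA \<tau> = c * integral {0..h} (\<lambda>v. gB (\<tau> + v))" by simp
  qed
  finally show ?thesis by (simp add: nested_integral_cmult)
qed

lemma box_sides_Cons: "box_sides (h # hs) (i # ks) = replicate i h @ box_sides hs ks"
  by (simp add: box_sides_def)

lemma length_box_sides: "length hs = length ks \<Longrightarrow> length (box_sides hs ks) = sum_list ks"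
  by (induction hs ks rule: list_induct2) (simp_all add: box_sides_def)

lemma set_box_sides_subset: "set (box_sides hs ks) \<subseteq> set hs"
  unfolding box_sides_def by (auto dest: set_zip_leftD)

lemma negdiff_funpow_nested_integral:
  fixes G :: "nat \<Rightarrow> real \<Rightarrow> complex" and s :: complex
  assumes D: "\<And>m \<tau>. \<tau> > 0 \<Longrightarrow> (G m has_vector_derivative - (s + of_nat m) * G (Suc m) \<tau>) (at \<tau>)"
    and C: "\<And>m. continuous_on {0<..} (G m)"
    and h: "h > 0" and L: "\<forall>x\<in>set L. x \<ge> 0"
    and F: "\<And>t. t > 0 \<Longrightarrow> F t = pochhammer s N * nested_integral L (G N) t"
  shows "t > 0 \<Longrightarrow>
    (negdiff h ^^ i) F t = pochhammer s (N + i) * nested_integral (replicate i h @ L) (G (N + i)) t"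
proof (induction i arbitrary: t)
  case (Suc i)
  have L': "\<forall>x\<in>set (replicate i h @ L). x \<ge> 0" using L h by auto
  have "(negdiff h ^^ Suc i) F t = - ((negdiff h ^^ i) F (t + h) - (negdiff h ^^ i) F t)"
    by (simp add: negdiff_def)
  also have "\<dots> = - (pochhammer s (N + i) * nested_integral (replicate i h @ L) (G (N + i)) (t + h)
      - pochhammer s (N + i) * nested_integral (replicate i h @ L) (G (N + i)) t)"
    using Suc.IH[of t] Suc.IH[of "t + h"] Suc.prems h by simp
  also have "\<dots> = pochhammer s (N + i) * negdiff h (nested_integral (replicate i h @ L) (G (N + i))) t"
    by (simp add: negdiff_def algebra_simps)
  also have "negdiff h (nested_integral (replicate i h @ L) (G (N + i))) t
      = (s + of_nat (N + i)) * nested_integral (h # replicate i h @ L) (G (Suc (N + i))) t"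
    using negdiff_nested_integral[OF D C L' Suc.prems h] by simp
  finally show ?case by (simp add: pochhammer_rec' ac_simps)
qed (use F in simp)

lemma negdiff_multi_nested_integral:
  fixes G :: "nat \<Rightarrow> real \<Rightarrow> complex" and s :: complex
  assumes D: "\<And>m \<tau>. \<tau> > 0 \<Longrightarrow> (G m has_vector_derivative - (s + of_nat m) * G (Suc m) \<tau>) (at \<tau>)"
    and C: "\<And>m. continuous_on {0<..} (G m)"
    and len: "length hs = length ks" and pos: "\<forall>h\<in>set hs. h > 0"
  shows "t > 0 \<Longrightarrow> negdiff_multi hs ks (G 0) t
           = pochhammer s (sum_list ks) * nested_integral (box_sides hs ks) (G (sum_list ks)) t"
  using len pos
proof (induction hs ks arbitrary: t rule: list_induct2)
  case (Cons h hs i ks)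
  have "\<forall>x\<in>set (box_sides hs ks). x \<ge> 0"
    using set_box_sides_subset[of hs ks] Cons.prems by force
  then have "(negdiff h ^^ i) (negdiff_multi hs ks (G 0)) t = pochhammer s (sum_list ks + i) *
      nested_integral (replicate i h @ box_sides hs ks) (G (sum_list ks + i)) t"
    using Cons by (intro negdiff_funpow_nested_integral[OF D C]) auto
  then show ?case by (simp add: box_sides_Cons add.commute)
qed (simp add: box_sides_def)

lemma product_sigma_finite_lborel: "product_sigma_finite (\<lambda>_::nat. lborel :: real measure)"
  by (rule product_sigma_finite.intro) (rule lborel.sigma_finite_measure_axioms)

lemma emeasure_PiM_box_less_top:
  fixes J :: "nat set" and b :: "nat \<Rightarrow> real"
  assumes J: "finite J"
  shows "emeasure (PiM J (\<lambda>_. lborel)) (PiE J (\<lambda>k. {0..b k})) < \<infinity>"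
proof -
  have "emeasure (PiM J (\<lambda>_. lborel)) (PiE J (\<lambda>k. {0..b k})) = (\<Prod>i\<in>J. emeasure lborel {0..b i})"
    by (rule product_sigma_finite.emeasure_PiM[OF product_sigma_finite_lborel J]) auto
  also have "\<dots> < \<infinity>"
  proof -
    have "emeasure lborel {0..b i} \<noteq> top" for i by (cases "0 \<le> b i") auto
    then show ?thesis using J by (simp add: ennreal_prod_eq_top less_top[symmetric])
  qed
  finally show ?thesis .
qed

lemma set_integrable_PiM_box:
  fixes g :: "real \<Rightarrow> complex" and b :: "nat \<Rightarrow> real"
  assumes g: "continuous_on UNIV g" and J: "finite J"
  shows "set_integrable (PiM J (\<lambda>_. lborel)) (PiE J (\<lambda>k. {0..b k})) (\<lambda>u. g (t + (\<Sum>k\<in>J. u k)))"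
proof -
  define A where "A = PiE J (\<lambda>k. {0..b k})"
  define r where "r = (\<Sum>k\<in>J. \<bar>b k\<bar>)"
  obtain C where C: "\<forall>x\<in>g ` {t - r..t + r}. norm x \<le> C"
    using compact_imp_bounded[OF compact_continuous_image[OF continuous_on_subset[OF g] compact_Icc]]
    unfolding bounded_iff by blast
  have A: "A \<in> sets (PiM J (\<lambda>_. lborel))" unfolding A_def by (rule sets_PiM_I_finite[OF J]) auto
  have int: "integrable (PiM J (\<lambda>_. lborel)) (\<lambda>u. C * indicator A u)"
    using emeasure_PiM_box_less_top[OF J, of b] unfolding A_def[symmetric]
    by (intro integrable_mult_right integrable_real_indicator A)
  have "(\<lambda>u. t + (\<Sum>k\<in>J. u k)) \<in> borel_measurable (PiM J (\<lambda>_. lborel))"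
    by (intro borel_measurable_add borel_measurable_sum borel_measurable_const)
      (auto intro: measurable_component_singleton)
  then have "(\<lambda>u. g (t + (\<Sum>k\<in>J. u k))) \<in> borel_measurable (PiM J (\<lambda>_. lborel))"
    using borel_measurable_continuous_onI[OF g] by (rule measurable_compose)
  then have meas: "(\<lambda>u. indicator A u *\<^sub>R g (t + (\<Sum>k\<in>J. u k))) \<in> borel_measurable (PiM J (\<lambda>_. lborel))"
    using A by (intro borel_measurable_scaleR borel_measurable_indicator)
  have "norm (g (t + (\<Sum>k\<in>J. u k))) \<le> C" if "u \<in> A" for u
  proof -
    have "\<bar>\<Sum>k\<in>J. u k\<bar> \<le> r"
      using that unfolding A_def r_def by (intro order_trans[OF sum_abs sum_mono]) (auto simp: PiE_iff)
    then have "t + (\<Sum>k\<in>J. u k) \<in> {t - r..t + r}" by auto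
    then show ?thesis using C by blast
  qed
  then have "norm (indicator A u *\<^sub>R g (t + (\<Sum>k\<in>J. u k))) \<le> norm (C * indicator A u)" for u
    by (cases "u \<in> A") (auto intro: order_trans[OF _ abs_ge_self])
  then show ?thesis unfolding set_integrable_def A_def[symmetric]
    by (intro Bochner_Integration.integrable_bound[OF int meas] AE_I2)
qed

lemma PiM_box_integral_insert:
  fixes g :: "real \<Rightarrow> complex" and b :: "nat \<Rightarrow> real"
  assumes g: "continuous_on UNIV g" and I: "finite I" "a \<notin> I"
  shows "(LINT u : PiE (insert a I) (\<lambda>k. {0..b k}) | PiM (insert a I) (\<lambda>_. lborel).
            g (t + (\<Sum>k\<in>insert a I. u k)))
       = (LINT u : PiE I (\<lambda>k. {0..b k}) | PiM I (\<lambda>_. lborel).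
            integral {0..b a} (\<lambda>v. g (t + (\<Sum>k\<in>I. u k) + v)))"
proof -
  define B where "B = (\<lambda>k. {0..b k})"
  define F where "F u = indicator (PiE (insert a I) B) u *\<^sub>R g (t + (\<Sum>k\<in>insert a I. u k))" for u
  have "integrable (PiM (insert a I) (\<lambda>_. lborel)) F"
    using set_integrable_PiM_box[OF g, of "insert a I" b t] I(1)
    unfolding F_def[abs_def] B_def set_integrable_def by simp
  then have "integral\<^sup>L (PiM (insert a I) (\<lambda>_. lborel)) F = (LINT x|PiM I (\<lambda>_. lborel). LINT y|lborel. F (x(a := y)))"
    by (rule product_sigma_finite.product_integral_insert[OF product_sigma_finite_lborel I])
  also have "\<dots> = (LINT x|PiM I (\<lambda>_. lborel).
      indicator (PiE I B) x *\<^sub>R integral {0..b a} (\<lambda>v. g (t + (\<Sum>k\<in>I. x k) + v)))"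
  proof (rule Bochner_Integration.integral_cong[OF refl])
    fix x :: "nat \<Rightarrow> real" assume "x \<in> space (PiM I (\<lambda>_. lborel))"
    then have x: "x \<in> extensional I" by (simp add: space_PiM PiE_iff)
    define \<tau> where "\<tau> = t + (\<Sum>k\<in>I. x k)"
    have "(\<Sum>k\<in>insert a I. (x(a := y)) k) = y + (\<Sum>k\<in>I. x k)" for y
      using I by (simp add: sum.insert) (intro sum.cong refl, auto)
    moreover have "x(a := y) \<in> PiE (insert a I) B \<longleftrightarrow> x \<in> PiE I B \<and> y \<in> {0..b a}" for y
      using I(2) x by (auto simp: B_def PiE_iff extensional_def)
    ultimately have F: "F (x(a := y)) = indicator (PiE I B) x *\<^sub>R (indicator {0..b a} y *\<^sub>R g (\<tau> + y))" for y
      unfolding F_def \<tau>_def by (simp add: indicator_def algebra_simps)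
    have "set_integrable lborel {0..b a} (\<lambda>y. g (\<tau> + y))"
      unfolding set_integrable_def
      by (intro borel_integrable_compact compact_Icc continuous_on_compose2[OF g]) (auto intro: continuous_intros)
    then have "(LINT y|lborel. indicator {0..b a} y *\<^sub>R g (\<tau> + y)) = integral {0..b a} (\<lambda>y. g (\<tau> + y))"
      using set_borel_integral_eq_integral(2) unfolding set_lebesgue_integral_def by blast
    then show "(LINT y|lborel. F (x(a := y)))
        = indicator (PiE I B) x *\<^sub>R integral {0..b a} (\<lambda>v. g (t + (\<Sum>k\<in>I. x k) + v))"
      unfolding F integral_scaleR_right \<tau>_def by simp
  qed
  finally show ?thesis unfolding set_lebesgue_integral_def F_def B_def .
qed

lemma PiM_box_integral_eq_nested_integral:
  fixes g :: "real \<Rightarrow> complex"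
  assumes "continuous_on UNIV g" "\<forall>x\<in>set L. x \<ge> 0"
  shows "(LINT u : PiE {a..<a + length L} (\<lambda>k. {0 .. L ! (k - a)}) | PiM {a..<a + length L} (\<lambda>_. lborel).
            g (t + (\<Sum>k\<in>{a..<a + length L}. u k))) = nested_integral L g t"
  using assms
proof (induction L arbitrary: a g t)
  case Nil
  show ?case by (simp add: set_lebesgue_integral_def PiM_empty lebesgue_integral_count_space_finite)
next
  case (Cons h L)
  define I where "I = {Suc a..<Suc a + length L}"
  have ins: "{a..<a + length (h # L)} = insert a I" unfolding I_def by auto
  have PiE_I: "PiE I (\<lambda>k. {0 .. (h # L) ! (k - a)}) = PiE I (\<lambda>k. {0 .. L ! (k - Suc a)})"
    by (intro PiE_cong) (auto simp: I_def Suc_diff_Suc)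
  have cont: "continuous_on UNIV (\<lambda>\<tau>. integral {0..h} (\<lambda>v. g (\<tau> + v)))"
    by (rule continuous_on_integral_shift[OF Cons.prems(1)]) auto
  have "(LINT u : PiE {a..<a + length (h # L)} (\<lambda>k. {0 .. (h # L) ! (k - a)})
          | PiM {a..<a + length (h # L)} (\<lambda>_. lborel). g (t + (\<Sum>k\<in>{a..<a + length (h # L)}. u k)))
      = (LINT u : PiE I (\<lambda>k. {0 .. (h # L) ! (k - a)}) | PiM I (\<lambda>_. lborel).
          integral {0 .. (h # L) ! (a - a)} (\<lambda>v. g (t + (\<Sum>k\<in>I. u k) + v)))"
    unfolding ins by (rule PiM_box_integral_insert[OF Cons.prems(1)]) (auto simp: I_def)
  also have "\<dots> = (LINT u : PiE I (\<lambda>k. {0 .. L ! (k - Suc a)}) | PiM I (\<lambda>_. lborel).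
          integral {0..h} (\<lambda>v. g (t + (\<Sum>k\<in>I. u k) + v)))"
    unfolding PiE_I by simp
  also have "\<dots> = nested_integral L (\<lambda>\<tau>. integral {0..h} (\<lambda>v. g (\<tau> + v))) t"
    unfolding I_def by (rule Cons.IH[of "\<lambda>\<tau>. integral {0..h} (\<lambda>v. g (\<tau> + v))" "Suc a" t])
      (use cont Cons.prems(2) in auto)
  finally show ?case by simp
qed

lemma PiM_box_integral_eq_nested_integral_pos:
  fixes g :: "real \<Rightarrow> complex"
  assumes g: "continuous_on {0<..} g" and L: "\<forall>x\<in>set L. x \<ge> 0" and t: "t > 0"
  shows "(LINT u : PiE {..<length L} (\<lambda>k. {0 .. L ! k}) | PiM {..<length L} (\<lambda>_. lborel).
            g (t + (\<Sum>k<length L. u k))) = nested_integral L g t"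
proof -
  define g' where "g' \<tau> = g (max \<tau> t)" for \<tau>
  have "continuous_on UNIV g'"
    unfolding g'_def using t by (intro continuous_on_compose2[OF g] continuous_intros) auto
  from PiM_box_integral_eq_nested_integral[OF this L, of 0 t]
  have "(LINT u : PiE {..<length L} (\<lambda>k. {0 .. L ! k}) | PiM {..<length L} (\<lambda>_. lborel).
      g' (t + (\<Sum>k<length L. u k))) = nested_integral L g' t"
    by (simp add: atLeast0LessThan)
  also have "\<dots> = nested_integral L g t"
    by (rule nested_integral_cong[OF _ L order_refl]) (simp add: g'_def)
  also have "(LINT u : PiE {..<length L} (\<lambda>k. {0 .. L ! k}) | PiM {..<length L} (\<lambda>_. lborel).
      g' (t + (\<Sum>k<length L. u k)))
      = (LINT u : PiE {..<length L} (\<lambda>k. {0 .. L ! k}) | PiM {..<length L} (\<lambda>_. lborel).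
      g (t + (\<Sum>k<length L. u k)))"
  proof (rule set_lebesgue_integral_cong)
    show "PiE {..<length L} (\<lambda>k. {0 .. L ! k}) \<in> sets (PiM {..<length L} (\<lambda>_. lborel))"
      by (rule sets_PiM_I_finite) auto
    show "\<forall>u. u \<in> PiE {..<length L} (\<lambda>k. {0 .. L ! k}) \<longrightarrow>
        g' (t + (\<Sum>k<length L. u k)) = g (t + (\<Sum>k<length L. u k))"
    proof (intro allI impI)
      fix u assume "u \<in> PiE {..<length L} (\<lambda>k. {0 .. L ! k})"
      then have "(\<Sum>k<length L. u k) \<ge> 0" by (intro sum_nonneg) (auto simp: PiE_iff)
      then show "g' (t + (\<Sum>k<length L. u k)) = g (t + (\<Sum>k<length L. u k))" by (simp add: g'_def)
    qed
  qed
  finally show ?thesis .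
qed

section \<open>The space H\<close>

definition falling_factorial :: "nat \<Rightarrow> complex \<Rightarrow> complex" where
  "falling_factorial k z = (-1)^k * pochhammer (-z) k"

lemma holomorphic_falling_factorial: "falling_factorial k holomorphic_on A"
  unfolding falling_factorial_def pochhammer_prod by (intro holomorphic_intros)

locale H_space =
  fixes S :: "complex set" and f :: "complex \<Rightarrow> real \<Rightarrow> complex" and \<phi> :: "real \<Rightarrow> complex"
  assumes closed_S: "closed S" and discrete_S: "discrete_set S"
    and holomorphic_f: "\<And>t. t > 0 \<Longrightarrow> (\<lambda>z. f z t) holomorphic_on (- S)"
    and Reg_subset_Reg_pdt: "Reg f \<subseteq> Reg (pdt f)"
    and DL_phi: "DL \<phi>"
    and left_notin_S: "\<And>s. Re s \<ge> 1 \<Longrightarrow> - s \<notin> S"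
    and f_Laplace: "\<And>s t. Re s \<ge> 1 \<Longrightarrow> t > 0 \<Longrightarrow>
        f (- s) t = Laplace (\<lambda>u. \<phi> u * of_real u powr (s - 1) / Gamma s) t"
begin

lemma not_islimpt_S: "\<not> z islimpt S"
proof
  assume l: "z islimpt S"
  then have "z \<in> S" using closed_S closed_limpt by blast
  then obtain e where "e > 0" "\<forall>w\<in>S. dist w z < e \<longrightarrow> w = z"
    using discrete_S unfolding discrete_set_def by blast
  then show False using l unfolding islimpt_approachable by blast
qed

definition S_translates :: "complex set" where
  "S_translates = {w + of_nat n |w n. w \<in> S}"

text \<open>\<open>Omega\<close> avoids \<open>S\<close> together with all its translates by natural numbers, so it is stable
  under \<open>z \<mapsto> z - 1\<close>; it also contains the half-plane \<open>Re z \<le> -1\<close> where \<open>f\<close> is a Laplace transform.\<close>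

definition Omega :: "complex set" where
  "Omega = - S_translates"

lemma finite_S_translates_inter_cball: "finite (S_translates \<inter> cball c r)"
proof -
  define N where "N = nat \<lceil>Re c + r + 2\<rceil>"
  have "S_translates \<inter> cball c r \<subseteq> (\<Union>n\<le>N. (\<lambda>w. w + of_nat n) ` (S \<inter> cball (c - of_nat n) r))"
  proof
    fix x assume x: "x \<in> S_translates \<inter> cball c r"
    then obtain w n where w: "w \<in> S" "x = w + of_nat n" unfolding S_translates_def by blast
    have "Re w > -1" using left_notin_S[of "-w"] w by force
    moreover have "\<bar>Re x - Re c\<bar> \<le> r"
      using x abs_Re_le_cmod[of "x - c"] by (auto simp: dist_norm norm_minus_commute)
    ultimately have "n \<le> N" using w unfolding N_def by simp linarith
    moreover have "w \<in> cball (c - of_nat n) r" using x w by (auto simp: dist_norm algebra_simps)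
    ultimately show "x \<in> (\<Union>n\<le>N. (\<lambda>w. w + of_nat n) ` (S \<inter> cball (c - of_nat n) r))"
      using w by blast
  qed
  moreover have "finite (S \<inter> cball d r)" for d
    using finite_not_islimpt_in_compact[of "cball d r" S] not_islimpt_S by (simp add: Int_commute)
  ultimately show ?thesis by (meson finite_UN_I finite_atMost finite_imageI finite_subset)
qed

lemma not_islimpt_S_translates: "\<not> z islimpt S_translates"
proof
  assume "z islimpt S_translates"
  then have "infinite (S_translates \<inter> ball z 1)" by (simp add: islimpt_eq_infinite_ball)
  moreover have "S_translates \<inter> ball z 1 \<subseteq> S_translates \<inter> cball z 1" by auto
  ultimately show False using finite_S_translates_inter_cball finite_subset by blast
qed

lemma open_Omega: "open Omega"
proof -
  have "closed S_translates" using not_islimpt_S_translates closed_limpt by blast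
  then show ?thesis by (simp add: Omega_def open_Compl)
qed

lemma connected_Omega: "connected Omega"
proof -
  have "S_translates = (\<Union>m::nat. S_translates \<inter> cball 0 (real m))"
    by (auto intro: real_arch_simple)
  then have "countable S_translates"
    using finite_S_translates_inter_cball by (metis countable_UN countable_finite UNIV_I countableI_type)
  then have "connected (UNIV - S_translates)"
    by (intro connected_open_diff_countable) auto
  then show ?thesis by (simp add: Omega_def Compl_eq_Diff_UNIV)
qed

lemma Omega_subset: "Omega \<subseteq> - S"
  unfolding Omega_def S_translates_def by force

lemma Omega_minus_nat: "z \<in> Omega \<Longrightarrow> z - of_nat k \<in> Omega"
  unfolding Omega_def S_translates_def
  by (auto simp: algebra_simps) (metis add.assoc of_nat_add)

lemma Omega_left: "Re z \<le> -1 \<Longrightarrow> z \<in> Omega"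
  unfolding Omega_def S_translates_def using left_notin_S[of "- _"] by force

lemma punctured_cball_Omega: obtains r where "r > 0" "cball z r - {z} \<subseteq> Omega"
proof -
  obtain T where T: "z \<in> T" "open T" "\<forall>y\<in>T. y \<in> S_translates \<longrightarrow> y = z"
    using not_islimpt_S_translates[of z] unfolding islimpt_def by blast
  then obtain e where "e > 0" "ball z e \<subseteq> T" using open_contains_ball by blast
  then show ?thesis using T by (intro that[of "e/2"]) (auto simp: Omega_def subset_eq dist_commute)
qed

subsection \<open>Taylor expansion in \<open>t\<close>\<close>

lemma set_borel_measurable_phi: "set_borel_measurable lborel {0<..} \<phi>"
  using DL_phi unfolding DL_def by blast

lemma set_integrable_exp_norm_phi_powr:
  assumes "c > 0" "a \<ge> 0"
  shows "set_integrable lborel {0<..} (\<lambda>u. exp (- c * u) * (norm (\<phi> u) * u powr a))"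
proof -
  have exp_phi: "set_integrable lborel {0<..} (\<lambda>u. exp (- b * u) * norm (\<phi> u))" if "b > 0" for b
  proof -
    have "set_integrable lborel {0<..}
        (\<lambda>u. norm (exp (- complex_of_real b * complex_of_real u) * complex_of_real (norm (\<phi> u))))"
      using DL_phi that unfolding DL_def by (intro set_integrable_norm) auto
    then show ?thesis by (simp add: norm_mult exp_of_real[symmetric] del: exp_of_real)
  qed
  obtain K where K: "K > 0" "\<And>u. u > 0 \<Longrightarrow> u powr a \<le> K * exp (c / 2 * u)"
    using powr_le_const_mult_exp[of "c / 2" a] assms by auto
  have "set_integrable lborel {0<..} (\<lambda>u. K * (exp (- (c / 2) * u) * norm (\<phi> u)))"
    by (intro set_integrable_mult_right exp_phi) (use assms in simp)
  then show ?thesis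
  proof (rule set_integrable_bound)
    have "set_borel_measurable lborel {0<..} (\<lambda>u. (exp (- c * u) * u powr a) * norm (\<phi> u))"
      by (rule set_borel_measurable_mult[OF set_borel_measurable_norm[OF set_borel_measurable_phi]]) measurable
    then show "set_borel_measurable lborel {0<..} (\<lambda>u. exp (- c * u) * (norm (\<phi> u) * u powr a))"
      by (simp add: ac_simps)
    have "exp (- c * u) * (norm (\<phi> u) * u powr a) \<le> K * (exp (- (c / 2) * u) * norm (\<phi> u))" if "u > 0" for u
    proof -
      have "exp (- c * u) * (norm (\<phi> u) * u powr a) \<le> exp (- c * u) * (norm (\<phi> u) * (K * exp (c / 2 * u)))"
        using K(2)[OF that] by (intro mult_left_mono) auto
      then show ?thesis by (simp add: mult_exp_exp algebra_simps)
    qed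
    then show "AE u in lborel. u \<in> {0<..} \<longrightarrow> norm (exp (- c * u) * (norm (\<phi> u) * u powr a))
        \<le> norm (K * (exp (- (c / 2) * u) * norm (\<phi> u)))"
      using K(1) by (intro AE_I2) auto
  qed
qed

text \<open>Since \<open>\<partial>\<^sub>t f(z,t) = z f(z-1,t)\<close> (proved below), \<open>taylor_coeff t0 k z\<close> is the \<open>k\<close>-th
  \<open>t\<close>-derivative of \<open>f z\<close> at \<open>t0\<close>.\<close>

definition taylor_coeff :: "real \<Rightarrow> nat \<Rightarrow> complex \<Rightarrow> complex" where
  "taylor_coeff t0 k z = falling_factorial k z * f (z - of_nat k) t0"

definition taylor_series :: "real \<Rightarrow> real \<Rightarrow> complex \<Rightarrow> complex" where
  "taylor_series t0 t z = (\<Sum>k. complex_of_real ((t - t0)^k / fact k) * taylor_coeff t0 k z)"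

lemma taylor_coeff_Laplace:
  assumes t0: "t0 > 0" and z: "Re z \<le> real m - 1"
  shows "taylor_coeff t0 (m + j) z = falling_factorial m z * (-1)^j * rGamma (of_nat m - z) *
           Laplace (\<lambda>u. of_real u ^ j * (\<phi> u * of_real u powr (of_nat m - z - 1))) t0"
proof -
  define w where "w = of_nat m - z"
  have w: "Re (w + of_nat j) \<ge> 1" using z unfolding w_def by simp
  have ff: "falling_factorial (m + j) z = falling_factorial m z * (-1)^j * pochhammer w j"
    unfolding falling_factorial_def pochhammer_product' w_def by (simp add: power_add algebra_simps)
  have "f (z - of_nat (m + j)) t0 = f (- (w + of_nat j)) t0" unfolding w_def by (simp add: algebra_simps)
  also have "\<dots> = Laplace (\<lambda>u. \<phi> u * of_real u powr (w + of_nat j - 1) / Gamma (w + of_nat j)) t0"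
    by (rule f_Laplace[OF w t0])
  finally have "pochhammer w j * f (z - of_nat (m + j)) t0
      = Laplace (\<lambda>u. pochhammer w j * (\<phi> u * of_real u powr (w + of_nat j - 1) / Gamma (w + of_nat j))) t0"
    by (simp only: Laplace_cmult)
  also have "\<dots> = Laplace (\<lambda>u. rGamma w * (of_real u ^ j * (\<phi> u * of_real u powr (w - 1)))) t0"
  proof (rule Laplace_cong)
    fix u :: real assume "u > 0"
    then have "complex_of_real u powr (w + of_nat j - 1) = complex_of_real u powr ((w - 1) + of_nat j)"
      by (simp add: algebra_simps)
    also have "\<dots> = complex_of_real u powr (w - 1) * complex_of_real u ^ j"
      using \<open>u > 0\<close> by (simp add: powr_add powr_nat')
    finally have "complex_of_real u powr (w + of_nat j - 1) = complex_of_real u powr (w - 1) * complex_of_real u ^ j" .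
    then show "pochhammer w j * (\<phi> u * of_real u powr (w + of_nat j - 1) / Gamma (w + of_nat j))
        = rGamma w * (of_real u ^ j * (\<phi> u * of_real u powr (w - 1)))"
      using pochhammer_rGamma[of w j] by (simp add: rGamma_inverse_Gamma divide_inverse ac_simps)
  qed
  finally show ?thesis
    unfolding taylor_coeff_def ff Laplace_cmult w_def[symmetric] by (simp add: ac_simps)
qed

lemma f_eq_taylor_series_left:
  assumes s: "Re s \<ge> 1" and t0: "t0 > 0" and t: "\<bar>t - t0\<bar> < t0"
  shows "f (- s) t = taylor_series t0 t (- s)"
proof -
  define \<psi> where "\<psi> u = rGamma s * (\<phi> u * of_real u powr (s - 1))" for u
  have "set_borel_measurable lborel {0<..} (\<lambda>u. (rGamma s * of_real u powr (s - 1)) * \<phi> u)"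
    by (rule set_borel_measurable_mult[OF set_borel_measurable_phi]) measurable
  then have "set_borel_measurable lborel {0<..} \<psi>"
    by (simp add: \<psi>_def[abs_def] ac_simps)
  moreover have "set_integrable lborel {0<..} (\<lambda>u. exp (- (t0 - \<bar>t - t0\<bar>) * u) * norm (\<psi> u))"
  proof -
    have "set_integrable lborel {0<..}
        (\<lambda>u. norm (rGamma s) * (exp (- (t0 - \<bar>t - t0\<bar>) * u) * (norm (\<phi> u) * u powr (Re s - 1))))"
      using s t by (intro set_integrable_mult_right set_integrable_exp_norm_phi_powr) auto
    then show ?thesis
      by (rule set_integrable_cong[THEN iffD1, rotated -1])
        (auto simp: \<psi>_def norm_mult norm_of_real_powr)
  qed
  ultimately have "(\<lambda>k. complex_of_real ((t0 - t) ^ k / fact k) * Laplace (\<lambda>u. of_real u ^ k * \<psi> u) t0)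
      sums Laplace \<psi> t"
    by (rule Laplace_Taylor_sums)
  moreover have "complex_of_real ((t0 - t) ^ k / fact k) * Laplace (\<lambda>u. of_real u ^ k * \<psi> u) t0
      = complex_of_real ((t - t0) ^ k / fact k) * taylor_coeff t0 k (- s)" for k
  proof -
    have "(t0 - t) ^ k = (-1) ^ k * (t - t0) ^ k" by (simp flip: power_mult_distrib)
    moreover have "Laplace (\<lambda>u. of_real u ^ k * \<psi> u) t0
        = rGamma s * Laplace (\<lambda>u. of_real u ^ k * (\<phi> u * of_real u powr (s - 1))) t0"
      unfolding \<psi>_def by (simp add: mult.left_commute Laplace_cmult)
    ultimately show ?thesis
      using taylor_coeff_Laplace[of t0 "- s" 0 k] t0 s by (simp add: falling_factorial_def)
  qed
  moreover have "Laplace \<psi> t = f (- s) t"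
    using f_Laplace[OF s] t by (simp add: \<psi>_def Laplace_def rGamma_inverse_Gamma divide_inverse ac_simps)
  ultimately show ?thesis
    unfolding taylor_series_def by (simp add: sums_iff)
qed

lemma holomorphic_taylor_coeff:
  assumes "t0 > 0" shows "taylor_coeff t0 k holomorphic_on Omega"
proof -
  have "(\<lambda>z. f z t0) \<circ> (\<lambda>z. z - of_nat k) holomorphic_on Omega"
    using Omega_minus_nat Omega_subset
    by (intro holomorphic_on_compose_gen[OF _ holomorphic_f[OF assms]] holomorphic_intros) auto
  then show ?thesis
    unfolding taylor_coeff_def[abs_def] by (intro holomorphic_intros holomorphic_falling_factorial) (simp add: o_def)
qed

lemma norm_taylor_coeff_tail_le:
  assumes t0: "t0 > 0" and z: "Re z \<le> real m - 1" "real m - 1 - Re z \<le> B"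
  shows "norm (taylor_coeff t0 (m + j) z) \<le> norm (falling_factorial m z * rGamma (of_nat m - z)) *
           (LINT u:{0<..}|lborel. exp (- t0 * u) * (norm (\<phi> u) * (1 + u powr B) * u ^ j))"
proof -
  define a where "a = real m - Re z - 1"
  have a: "0 \<le> a" "a \<le> B" using z unfolding a_def by auto
  have "set_borel_measurable lborel {0<..} (\<lambda>u. (of_real u ^ j * of_real u powr (of_nat m - z - 1)) * \<phi> u)"
    by (rule set_borel_measurable_mult[OF set_borel_measurable_phi]) measurable
  then have meas: "set_borel_measurable lborel {0<..}
      (\<lambda>u. of_real u ^ j * (\<phi> u * of_real u powr (of_nat m - z - 1)))"
    by (simp add: ac_simps)
  have "set_integrable lborel {0<..} (\<lambda>u. exp (- t0 * u) * (norm (\<phi> u) * u powr real j)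
      + exp (- t0 * u) * (norm (\<phi> u) * u powr (B + real j)))"
    using t0 a by (intro set_integral_add(1) set_integrable_exp_norm_phi_powr) auto
  then have int: "set_integrable lborel {0<..} (\<lambda>u. exp (- t0 * u) * (norm (\<phi> u) * (1 + u powr B) * u ^ j))"
    by (rule set_integrable_cong[THEN iffD1, rotated -1]) (auto simp: powr_add powr_realpow algebra_simps)
  have le: "norm (of_real u ^ j * (\<phi> u * of_real u powr (of_nat m - z - 1)))
      \<le> norm (\<phi> u) * (1 + u powr B) * u ^ j" if "u > 0" for u
  proof -
    have "norm (of_real u ^ j * (\<phi> u * of_real u powr (of_nat m - z - 1))) = norm (\<phi> u) * u powr a * u ^ j"
      using that by (simp add: norm_mult norm_power norm_of_real_powr a_def)
    also have "\<dots> \<le> norm (\<phi> u) * (1 + u powr B) * u ^ j"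
      using that a by (intro mult_right_mono mult_left_mono powr_le_one_plus_powr) auto
    finally show ?thesis .
  qed
  have "norm (taylor_coeff t0 (m + j) z) = norm (falling_factorial m z * rGamma (of_nat m - z)) *
      norm (Laplace (\<lambda>u. of_real u ^ j * (\<phi> u * of_real u powr (of_nat m - z - 1))) t0)"
    by (simp add: taylor_coeff_Laplace[OF t0 z(1)] norm_mult norm_power)
  also have "\<dots> \<le> norm (falling_factorial m z * rGamma (of_nat m - z)) *
      (LINT u:{0<..}|lborel. exp (- t0 * u) * (norm (\<phi> u) * (1 + u powr B) * u ^ j))"
    by (intro mult_left_mono norm_Laplace_le[OF meas int le]) auto
  finally show ?thesis .
qed

lemma norm_taylor_coeff_tail_le_uniform:
  assumes t0: "t0 > 0" and K: "compact K"
  shows "\<exists>m C B. C \<ge> 0 \<and> B \<ge> 0 \<and> (\<forall>z\<in>K. \<forall>j. norm (taylor_coeff t0 (m + j) z)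
      \<le> C * (LINT u:{0<..}|lborel. exp (- t0 * u) * (norm (\<phi> u) * (1 + u powr B) * u ^ j)))"
proof -
  obtain R where R: "R > 0" "\<And>z. z \<in> K \<Longrightarrow> norm z \<le> R"
    using compact_imp_bounded[OF K] unfolding bounded_pos by blast
  define m where "m = nat \<lceil>R\<rceil> + 1"
  have zm: "Re z \<le> real m - 1" "real m - 1 - Re z \<le> real m + R" if "z \<in> K" for z
    using R(2)[OF that] abs_Re_le_cmod[of z] unfolding m_def by linarith+
  have "continuous_on K (\<lambda>z. falling_factorial m z * rGamma (of_nat m - z))"
    by (intro holomorphic_on_imp_continuous_on holomorphic_intros holomorphic_falling_factorial
      holomorphic_rGamma')
  from compact_imp_bounded[OF compact_continuous_image[OF this K]]
  obtain C where C: "C > 0" "\<And>z. z \<in> K \<Longrightarrow> norm (falling_factorial m z * rGamma (of_nat m - z)) \<le> C"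
    unfolding bounded_pos by blast
  have "norm (taylor_coeff t0 (m + j) z)
      \<le> C * (LINT u:{0<..}|lborel. exp (- t0 * u) * (norm (\<phi> u) * (1 + u powr (real m + R)) * u ^ j))"
    if z: "z \<in> K" for z j
  proof -
    have "norm (taylor_coeff t0 (m + j) z) \<le> norm (falling_factorial m z * rGamma (of_nat m - z)) *
        (LINT u:{0<..}|lborel. exp (- t0 * u) * (norm (\<phi> u) * (1 + u powr (real m + R)) * u ^ j))"
      by (rule norm_taylor_coeff_tail_le[OF t0 zm[OF z]])
    also have "\<dots> \<le> C * (LINT u:{0<..}|lborel. exp (- t0 * u) * (norm (\<phi> u) * (1 + u powr (real m + R)) * u ^ j))"
      using C(2)[OF z] by (intro mult_right_mono set_integral_nonneg_real) auto
    finally show ?thesis .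
  qed
  then show ?thesis using C R by (intro exI[of _ m] exI[of _ C] exI[of _ "real m + R"]) auto
qed

lemma taylor_coeff_bounded:
  assumes "t0 > 0" "compact K" "K \<subseteq> Omega"
  shows "\<exists>H. \<forall>z\<in>K. norm (taylor_coeff t0 k z) \<le> H"
proof -
  have "continuous_on K (taylor_coeff t0 k)"
    by (rule holomorphic_on_imp_continuous_on[OF holomorphic_on_subset[OF holomorphic_taylor_coeff]])
      (use assms in auto)
  from compact_imp_bounded[OF compact_continuous_image[OF this assms(2)]] show ?thesis
    unfolding bounded_iff by blast
qed

lemma summable_phi_moments:
  assumes \<delta>: "0 \<le> \<delta>" "\<delta> < t0" and B: "B \<ge> 0"
  shows "summable (\<lambda>j. \<delta>^j / fact j *
           (LINT u:{0<..}|lborel. exp (- t0 * u) * (norm (\<phi> u) * (1 + u powr B) * u ^ j)))"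
proof -
  have "set_integrable lborel {0<..} (\<lambda>u. exp (- (t0 - \<delta>) * u) * (norm (\<phi> u) * u powr 0)
      + exp (- (t0 - \<delta>) * u) * (norm (\<phi> u) * u powr B))"
    using \<delta> B by (intro set_integral_add(1) set_integrable_exp_norm_phi_powr) auto
  then have "set_integrable lborel {0<..} (\<lambda>u. exp (- (t0 - \<delta>) * u) * (norm (\<phi> u) * (1 + u powr B)))"
    by (rule set_integrable_cong[THEN iffD1, rotated -1]) (auto simp: algebra_simps)
  moreover have "0 \<le> norm (\<phi> u) * (1 + u powr B)" if "u > 0" for u by (simp add: add_nonneg_nonneg)
  ultimately have "summable (\<lambda>j. LINT u:{0<..}|lborel.
      exp (- t0 * u) * (norm (\<phi> u) * (1 + u powr B)) * ((\<delta> * u) ^ j / fact j))"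
    by (rule summable_Laplace_moments) (use \<delta> in auto)
  then show ?thesis
    unfolding set_integral_mult_right[symmetric]
    by (rule summable_cong[THEN iffD1, rotated], intro always_eventually allI set_lebesgue_integral_cong)
      (auto simp: power_mult_distrib)
qed

text \<open>Finitely many coefficients are bounded by continuity; the remaining ones are dominated by
  Laplace moments of \<open>\<bar>\<phi>\<bar>\<close>, whose exponential generating series converges for \<open>\<delta> < t0\<close>.\<close>

lemma taylor_terms_uniformly_summable:
  assumes t0: "t0 > 0" and K: "compact K" "K \<subseteq> Omega" and \<delta>: "0 \<le> \<delta>" "\<delta> < t0"
  obtains M where "summable M"
    "\<And>k z t. z \<in> K \<Longrightarrow> \<bar>t - t0\<bar> \<le> \<delta> \<Longrightarrow>
       norm (complex_of_real ((t - t0)^k / fact k) * taylor_coeff t0 k z) \<le> M k"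
proof -
  define I where "I B j = (LINT u:{0<..}|lborel. exp (- t0 * u) * (norm (\<phi> u) * (1 + u powr B) * u ^ j))"
    for B j
  from norm_taylor_coeff_tail_le_uniform[OF t0 K(1)] obtain m C B where C: "C \<ge> 0" "B \<ge> 0"
    and tail: "\<And>z j. z \<in> K \<Longrightarrow> norm (taylor_coeff t0 (m + j) z) \<le> C * I B j"
    unfolding I_def by blast
  define H where "H k = (SOME H. \<forall>z\<in>K. norm (taylor_coeff t0 k z) \<le> H)" for k
  have H: "norm (taylor_coeff t0 k z) \<le> H k" if "z \<in> K" for k z
    using someI_ex[OF taylor_coeff_bounded[OF t0 K]] that unfolding H_def by blast
  define M where "M k = (if k < m then \<delta>^k / fact k * H k
    else \<delta>^m * C * (\<delta>^(k - m) / fact (k - m) * I B (k - m)))" for k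
  show ?thesis
  proof (rule that[of M])
    have "summable (\<lambda>j. \<delta>^m * C * (\<delta>^j / fact j * I B j))"
      unfolding I_def using summable_phi_moments[OF \<delta> C(2)] by (rule summable_mult)
    then show "summable M" using summable_iff_shift[of M m] by (simp add: M_def)
    fix k z t assume z: "z \<in> K" and t: "\<bar>t - t0\<bar> \<le> \<delta>"
    have dk: "\<bar>t - t0\<bar>^k / fact k \<le> \<delta>^k / fact k" using t by (intro divide_right_mono power_mono) auto
    have "norm (complex_of_real ((t - t0)^k / fact k) * taylor_coeff t0 k z)
        = \<bar>t - t0\<bar>^k / fact k * norm (taylor_coeff t0 k z)"
      by (simp only: norm_mult norm_of_real) (simp add: power_abs)
    also have "\<dots> \<le> M k"
    proof (cases "k < m")
      case True
      have "\<bar>t - t0\<bar>^k / fact k * norm (taylor_coeff t0 k z) \<le> \<delta>^k / fact k * H k"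
        using dk H[OF z, of k] \<delta> by (intro mult_mono) auto
      then show ?thesis using True by (simp add: M_def)
    next
      case False
      then obtain j where k: "k = m + j" using le_Suc_ex not_less by blast
      have "\<bar>t - t0\<bar>^k / fact k \<le> \<delta>^m * (\<delta>^j / fact j)"
        using dk power_div_fact_add_le[OF \<delta>(1), of m j] unfolding k by linarith
      then have "\<bar>t - t0\<bar>^k / fact k * norm (taylor_coeff t0 k z) \<le> \<delta>^m * (\<delta>^j / fact j) * (C * I B j)"
        using tail[OF z, of j] \<delta>(1) unfolding k by (intro mult_mono) auto
      then show ?thesis by (simp add: M_def k ac_simps)
    qed
    finally show "norm (complex_of_real ((t - t0)^k / fact k) * taylor_coeff t0 k z) \<le> M k" .
  qed
qed

lemma holomorphic_taylor_series:
  assumes t0: "t0 > 0" and t: "\<bar>t - t0\<bar> < t0"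
  shows "taylor_series t0 t holomorphic_on Omega"
proof -
  define P where "P n w = (\<Sum>k<n. complex_of_real ((t - t0)^k / fact k) * taylor_coeff t0 k w)" for n w
  have local_holo: "taylor_series t0 t holomorphic_on ball z r" if sub: "cball z r \<subseteq> Omega" for z r
  proof -
    obtain M where M: "summable M" "\<And>k w \<tau>. w \<in> cball z r \<Longrightarrow> \<bar>\<tau> - t0\<bar> \<le> \<bar>t - t0\<bar> \<Longrightarrow>
        norm (complex_of_real ((\<tau> - t0)^k / fact k) * taylor_coeff t0 k w) \<le> M k"
      using taylor_terms_uniformly_summable[OF t0 compact_cball sub, of "\<bar>t - t0\<bar>"] t by auto
    have "P n holomorphic_on cball z r" for n
      unfolding P_def using holomorphic_on_subset[OF holomorphic_taylor_coeff[OF t0] sub]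
      by (intro holomorphic_intros) auto
    then have "\<forall>\<^sub>F n in sequentially. continuous_on (cball z r) (P n) \<and> P n holomorphic_on ball z r"
      using holomorphic_on_subset[OF _ ball_subset_cball]
      by (intro always_eventually allI conjI holomorphic_on_imp_continuous_on) blast+
    moreover have "uniform_limit (cball z r) P (taylor_series t0 t) sequentially"
      unfolding P_def[abs_def] taylor_series_def[abs_def] by (rule Weierstrass_m_test) (use M in auto)
    ultimately show ?thesis
      by (rule holomorphic_uniform_limit) (use trivial_limit_sequentially in auto)
  qed
  show ?thesis
    unfolding holomorphic_on_def
  proof
    fix z assume "z \<in> Omega"
    then obtain r where "r > 0" "cball z r \<subseteq> Omega" using open_Omega open_contains_cball by blast
    then have "taylor_series t0 t field_differentiable at z"
      using local_holo by (intro holomorphic_on_imp_differentiable_at[of _ "ball z r"]) auto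
    then show "taylor_series t0 t field_differentiable at z within Omega"
      by (rule field_differentiable_at_within)
  qed
qed

lemma f_eq_taylor_series:
  assumes z: "z \<in> Omega" and t0: "t0 > 0" and t: "\<bar>t - t0\<bar> < t0"
  shows "f z t = taylor_series t0 t z"
proof (rule analytic_continuation_open[of "{z. Re z < -1}" Omega "\<lambda>z. f z t" "taylor_series t0 t"])
  show "(\<lambda>z. f z t) holomorphic_on Omega"
    using t by (intro holomorphic_on_subset[OF holomorphic_f Omega_subset]) simp
  show "taylor_series t0 t holomorphic_on Omega" by (rule holomorphic_taylor_series[OF t0 t])
  show "{z. Re z < -1} \<subseteq> Omega" using Omega_left by auto
  show "{z. Re z < -1} \<noteq> {}" by (rule ex_in_conv[THEN iffD1], rule exI[of _ "-2"]) simp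
  show "open {z. Re z < -1}" by (rule open_halfspace_Re_lt)
  fix w assume "w \<in> {z. Re z < -1}"
  then show "f w t = taylor_series t0 t w"
    using f_eq_taylor_series_left[of "- w" t0 t] t0 t by simp
qed (fact open_Omega connected_Omega z)+

lemma taylor_series_sums:
  assumes z: "z \<in> Omega" and t1: "t1 > 0" and \<tau>: "\<bar>\<tau> - t1\<bar> < t1"
  shows "(\<lambda>k. complex_of_real ((\<tau> - t1)^k / fact k) * taylor_coeff t1 k z) sums f z \<tau>"
proof -
  obtain M where M: "summable M" "\<And>k w \<tau>'. w \<in> {z} \<Longrightarrow> \<bar>\<tau>' - t1\<bar> \<le> \<bar>\<tau> - t1\<bar> \<Longrightarrow>
      norm (complex_of_real ((\<tau>' - t1)^k / fact k) * taylor_coeff t1 k w) \<le> M k"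
    using taylor_terms_uniformly_summable[OF t1, of "{z}" "\<bar>\<tau> - t1\<bar>"] z \<tau> by auto
  have "summable (\<lambda>k. complex_of_real ((\<tau> - t1)^k / fact k) * taylor_coeff t1 k z)"
    by (rule summable_comparison_test[OF _ M(1)]) (use M(2) in auto)
  then show ?thesis using f_eq_taylor_series[OF z t1 \<tau>] by (simp add: taylor_series_def summable_sums)
qed

lemma has_vector_derivative_f:
  assumes z: "z \<in> Omega" and t: "t > 0"
  shows "((\<lambda>\<tau>. f z \<tau>) has_vector_derivative z * f (z - 1) t) (at t)"
proof -
  define \<delta> where "\<delta> = t / 2"
  have \<delta>: "\<delta> > 0" "\<delta> < t" using t unfolding \<delta>_def by auto
  have K: "compact {z}" "{z} \<subseteq> Omega" using z by auto
  obtain M where M: "summable M" "\<And>k w \<tau>. w \<in> {z} \<Longrightarrow> \<bar>\<tau> - t\<bar> \<le> \<delta> \<Longrightarrow>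
      norm (complex_of_real ((\<tau> - t)^k / fact k) * taylor_coeff t k w) \<le> M k"
    using taylor_terms_uniformly_summable[OF t K less_imp_le[OF \<delta>(1)] \<delta>(2)] by blast
  define c where "c k = taylor_coeff t k z / fact k" for k
  have "norm (norm (c k) * \<delta>^k) \<le> M k" for k
  proof -
    have "norm (complex_of_real (((t + \<delta>) - t)^k / fact k) * taylor_coeff t k z) \<le> M k"
      using M(2)[of z "t + \<delta>" k] \<delta> by simp
    moreover have "norm (complex_of_real (((t + \<delta>) - t)^k / fact k) * taylor_coeff t k z) = norm (norm (c k) * \<delta>^k)"
      using \<delta> by (simp add: c_def norm_mult norm_divide norm_power)
    ultimately show ?thesis by simp
  qed
  then have "summable (\<lambda>k. norm (c k) * \<delta>^k)"
    by (intro summable_comparison_test[OF _ M(1)]) auto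
  moreover have "f z \<tau> = (\<Sum>k. c k * complex_of_real (\<tau> - t)^k)" if "\<bar>\<tau> - t\<bar> < \<delta>" for \<tau>
    using f_eq_taylor_series[OF z t, of \<tau>] that \<delta> unfolding taylor_series_def c_def
    by (simp add: field_simps)
  ultimately have "((\<lambda>\<tau>. f z \<tau>) has_vector_derivative c 1) (at t)"
    by (intro has_vector_derivative_power_series[OF \<delta>(1)]) auto
  then show ?thesis by (simp add: c_def taylor_coeff_def falling_factorial_def)
qed

subsection \<open>Regular points\<close>

lemma holomorphic_f_Omega: "t > 0 \<Longrightarrow> A \<subseteq> Omega \<Longrightarrow> (\<lambda>z. f z t) holomorphic_on A"
  using Omega_subset by (intro holomorphic_on_subset[OF holomorphic_f]) auto

lemma Omega_subset_Reg: "Omega \<subseteq> Reg f"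
proof
  fix z assume "z \<in> Omega"
  then obtain e where e: "e > 0" "ball z e \<subseteq> Omega" using open_Omega open_contains_ball by blast
  show "z \<in> Reg f"
  proof (rule RegI)
    fix t :: real assume "t > 0"
    then have "(\<lambda>z. f z t) holomorphic_on ball z e" using e by (intro holomorphic_f_Omega)
    moreover from this have "isCont (\<lambda>w. f w t) z"
      using e(1) by (intro continuous_on_interior[OF holomorphic_on_imp_continuous_on]) auto
    then have "((\<lambda>w. f w t) \<longlongrightarrow> f z t) (at z)" by (simp add: isCont_def)
    ultimately show "\<exists>e>0. (\<lambda>w. f w t) holomorphic_on ball z e - {z} \<and> (\<exists>L. ((\<lambda>w. f w t) \<longlongrightarrow> L) (at z))"
      using e(1) by (blast intro: holomorphic_on_subset)
  qed
qed

lemma pdt_eq: "z \<in> Omega \<Longrightarrow> t > 0 \<Longrightarrow> pdt f z t = z * f (z - 1) t"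
  unfolding pdt_def by (rule vector_derivative_at[OF has_vector_derivative_f])

lemma tendsto_mult_f_minus_one:
  assumes z0: "z0 \<in> Reg f" and t: "t > 0"
  shows "((\<lambda>u. u * f (u - 1) t) \<longlongrightarrow> fR (pdt f) z0 t) (at z0)"
proof -
  obtain R where R: "R > 0" "cball z0 R - {z0} \<subseteq> Omega" by (rule punctured_cball_Omega)
  have "((\<lambda>u. pdt f u t) \<longlongrightarrow> fR (pdt f) z0 t) (at z0)"
    using Reg_subset_Reg_pdt z0 t by (intro tendsto_fR) auto
  moreover have "u \<in> Omega" if "u \<noteq> z0" "dist u z0 < R" for u
    using R(2) that by (auto simp: dist_commute)
  then have "eventually (\<lambda>u. pdt f u t = u * f (u - 1) t) (at z0)"
    unfolding eventually_at using R(1) t by (intro exI[of _ R]) (auto simp: pdt_eq)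
  ultimately show ?thesis by (rule Lim_transform_eventually)
qed

lemma tendsto_f_minus_one:
  assumes z0: "z0 \<in> Reg f" "z0 \<noteq> 0" and t: "t > 0"
  shows "((\<lambda>w. f w t) \<longlongrightarrow> fR (pdt f) z0 t / z0) (at (z0 - 1))"
proof -
  have "((\<lambda>u. u * f (u - 1) t / u) \<longlongrightarrow> fR (pdt f) z0 t / z0) (at z0)"
    using z0 t by (intro tendsto_divide tendsto_mult_f_minus_one tendsto_ident_at)
  moreover have "eventually (\<lambda>u. u * f (u - 1) t / u = f (u - 1) t) (at z0)"
    using tendsto_imp_eventually_ne[OF tendsto_ident_at z0(2)] by eventually_elim simp
  ultimately have "((\<lambda>u. f (u - 1) t) \<longlongrightarrow> fR (pdt f) z0 t / z0) (at z0)"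
    by (rule Lim_transform_eventually)
  from LIM_offset[OF this, of 1] show ?thesis by simp
qed

lemma fR_pdt_eq:
  assumes z0: "z0 \<in> Reg f" and t: "t > 0"
  shows "fR (pdt f) z0 t = z0 * fR f (z0 - 1) t"
proof (cases "z0 = 0")
  case True
  have "continuous_on Omega (\<lambda>w. f w t)"
    using t by (intro holomorphic_on_imp_continuous_on holomorphic_f_Omega) auto
  then have "isCont (\<lambda>w. f w t) (0 - 1)"
    using Omega_left[of "-1"] open_Omega by (simp add: continuous_on_eq_continuous_at)
  then have "isCont (\<lambda>u. u * f (u - 1) t) 0"
    by (intro continuous_intros isCont_o2[where f = "\<lambda>u. u - 1" and g = "\<lambda>w. f w t"]) auto
  then have "((\<lambda>u. u * f (u - 1) t) \<longlongrightarrow> 0) (at 0)" by (simp add: isCont_def)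
  with tendsto_mult_f_minus_one[OF z0 t] True have "fR (pdt f) z0 t = 0"
    by (auto intro: tendsto_unique[of "at (0::complex)"])
  then show ?thesis using True by simp
next
  case False
  then show ?thesis using fR_eqI[where f = f and t = t, OF tendsto_f_minus_one[OF z0 False t]] by simp
qed

lemma Reg_minus_one:
  assumes z0: "z0 \<in> Reg f" shows "z0 - 1 \<in> Reg f"
proof (cases "z0 = 0")
  case True
  then show ?thesis using Omega_subset_Reg Omega_left[of "-1"] by auto
next
  case False
  obtain R where R: "R > 0" "cball z0 R - {z0} \<subseteq> Omega" by (rule punctured_cball_Omega)
  have "ball (z0 - 1) R - {z0 - 1} \<subseteq> Omega"
  proof
    fix w assume "w \<in> ball (z0 - 1) R - {z0 - 1}"
    then have "w + 1 \<in> Omega" using R(2) by (auto simp: dist_norm algebra_simps)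
    then show "w \<in> Omega" using Omega_minus_nat[of "w + 1" 1] by simp
  qed
  then show ?thesis
    using R(1) tendsto_f_minus_one[OF z0 False] holomorphic_f_Omega by (intro RegI) blast
qed

lemma contour_integrable_taylor_coeff_circlepath:
  assumes t1: "t1 > 0" and \<rho>: "0 < \<rho>" and sphere: "sphere z0 \<rho> \<subseteq> Omega"
  shows "(\<lambda>u. taylor_coeff t1 k u / (u - z0)) contour_integrable_on circlepath z0 \<rho>"
proof (rule contour_integrable_continuous_circlepath)
  have "continuous_on (sphere z0 \<rho>) (taylor_coeff t1 k)"
    by (rule holomorphic_on_imp_continuous_on[OF holomorphic_on_subset[OF holomorphic_taylor_coeff[OF t1] sphere]])
  then show "continuous_on (path_image (circlepath z0 \<rho>)) (\<lambda>u. taylor_coeff t1 k u / (u - z0))"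
    using \<rho> by (auto simp: path_image_circlepath_nonneg intro!: continuous_intros)
qed

lemma has_contour_integral_fR:
  assumes z0: "z0 \<in> Reg f" and R: "cball z0 R - {z0} \<subseteq> Omega" and \<rho>: "0 < \<rho>" "\<rho> < R"
    and \<tau>: "\<tau> > 0"
  shows "((\<lambda>u. f u \<tau> / (u - z0)) has_contour_integral 2 * of_real pi * \<i> * fR f z0 \<tau>) (circlepath z0 \<rho>)"
proof (rule Cauchy_integral_circlepath_punctured[OF _ tendsto_fR[OF z0 \<tau>] \<rho>])
  show "(\<lambda>u. f u \<tau>) holomorphic_on ball z0 R - {z0}"
  proof (rule holomorphic_f_Omega[OF \<tau>])
    show "ball z0 R - {z0} \<subseteq> Omega" using R ball_subset_cball[of z0 R] by blast
  qed
qed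

lemma circlepath_taylor_sums:
  assumes z0: "z0 \<in> Reg f" and R: "cball z0 R - {z0} \<subseteq> Omega" and \<rho>: "0 < \<rho>" "\<rho> < R"
    and t1: "t1 > 0" and \<tau>: "\<bar>\<tau> - t1\<bar> < t1"
  shows "(\<lambda>k. complex_of_real ((\<tau> - t1)^k / fact k) *
            contour_integral (circlepath z0 \<rho>) (\<lambda>u. taylor_coeff t1 k u / (u - z0)))
           sums (2 * of_real pi * \<i> * fR f z0 \<tau>)"
proof -
  have sphere: "sphere z0 \<rho> \<subseteq> Omega" using R \<rho> by auto
  obtain M where M: "summable M" "\<And>k u \<tau>'. u \<in> sphere z0 \<rho> \<Longrightarrow> \<bar>\<tau>' - t1\<bar> \<le> \<bar>\<tau> - t1\<bar> \<Longrightarrow>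
      norm (complex_of_real ((\<tau>' - t1)^k / fact k) * taylor_coeff t1 k u) \<le> M k"
    using taylor_terms_uniformly_summable[OF t1 compact_sphere sphere, of "\<bar>\<tau> - t1\<bar>"] \<tau> by auto
  note int = contour_integrable_taylor_coeff_circlepath[OF t1 \<rho>(1) sphere]
  define F where "F k u = complex_of_real ((\<tau> - t1)^k / fact k) * (taylor_coeff t1 k u / (u - z0))" for k u
  have sums: "(\<lambda>k. contour_integral (circlepath z0 \<rho>) (F k)) sums contour_integral (circlepath z0 \<rho>) (\<lambda>u. \<Sum>k. F k u)"
  proof (rule sums_contour_integral_circlepath[OF _ summable_divide[OF M(1), of \<rho>] _ \<rho>(1)])
    show "continuous_on (sphere z0 \<rho>) (F k)" for k
      using \<rho> unfolding F_def
      by (intro continuous_intros holomorphic_on_imp_continuous_on holomorphic_on_subset[OF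
          holomorphic_taylor_coeff[OF t1] sphere]) auto
    show "norm (F k u) \<le> M k / \<rho>" if "u \<in> sphere z0 \<rho>" for k u
    proof -
      have "norm (F k u) = norm (complex_of_real ((\<tau> - t1)^k / fact k) * taylor_coeff t1 k u) / \<rho>"
        using that by (simp add: F_def norm_mult norm_divide dist_norm norm_minus_commute)
      also have "\<dots> \<le> M k / \<rho>" using M(2)[OF that order_refl] \<rho> by (intro divide_right_mono) auto
      finally show ?thesis .
    qed
  qed
  have terms: "contour_integral (circlepath z0 \<rho>) (F k) = complex_of_real ((\<tau> - t1)^k / fact k) *
      contour_integral (circlepath z0 \<rho>) (\<lambda>u. taylor_coeff t1 k u / (u - z0))" for k
    unfolding F_def by (rule contour_integral_lmul[OF int])
  have "(\<Sum>k. F k u) = f u \<tau> / (u - z0)" if "u \<in> path_image (circlepath z0 \<rho>)" for u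
  proof -
    have "u \<in> Omega" using that sphere \<rho> by (auto simp: path_image_circlepath_nonneg)
    from sums_divide[OF taylor_series_sums[OF this t1 \<tau>], of "u - z0"] show ?thesis
      unfolding F_def times_divide_eq_right by (rule sums_unique[symmetric])
  qed
  then have "contour_integral (circlepath z0 \<rho>) (\<lambda>u. \<Sum>k. F k u)
      = contour_integral (circlepath z0 \<rho>) (\<lambda>u. f u \<tau> / (u - z0))"
    by (rule contour_integral_eq)
  also have "\<dots> = 2 * of_real pi * \<i> * fR f z0 \<tau>"
    using \<tau> by (intro contour_integral_unique has_contour_integral_fR[OF z0 R \<rho>]) linarith
  finally show ?thesis using sums by (simp add: terms)
qed

lemma has_contour_integral_pdt:
  assumes z0: "z0 \<in> Reg f" and R: "cball z0 R - {z0} \<subseteq> Omega" and \<rho>: "0 < \<rho>" "\<rho> < R"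
    and t1: "t1 > 0"
  shows "((\<lambda>u. taylor_coeff t1 1 u / (u - z0)) has_contour_integral
           2 * of_real pi * \<i> * fR (pdt f) z0 t1) (circlepath z0 \<rho>)"
proof (rule Cauchy_integral_circlepath_punctured[OF _ _ \<rho>])
  show "taylor_coeff t1 1 holomorphic_on ball z0 R - {z0}"
    using R ball_subset_cball[of z0 R] by (intro holomorphic_on_subset[OF holomorphic_taylor_coeff[OF t1]]) blast
  show "(taylor_coeff t1 1 \<longlongrightarrow> fR (pdt f) z0 t1) (at z0)"
    using tendsto_mult_f_minus_one[OF z0 t1] by (simp add: taylor_coeff_def[abs_def] falling_factorial_def)
qed

lemma norm_contour_integral_taylor_coeff_le:
  assumes t1: "t1 > 0" and \<rho>: "0 < \<rho>" and sphere: "sphere z0 \<rho> \<subseteq> Omega"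
    and le: "\<And>u. u \<in> sphere z0 \<rho> \<Longrightarrow> norm (c * taylor_coeff t1 k u) \<le> B"
  shows "norm (c * contour_integral (circlepath z0 \<rho>) (\<lambda>u. taylor_coeff t1 k u / (u - z0))) \<le> 2 * pi * B"
proof -
  have bound: "norm (c * (taylor_coeff t1 k u / (u - z0))) \<le> B / \<rho>" if "norm (u - z0) = \<rho>" for u
  proof -
    have u: "u \<in> sphere z0 \<rho>" using that by (simp add: dist_norm norm_minus_commute)
    have "norm (c * (taylor_coeff t1 k u / (u - z0))) = norm (c * taylor_coeff t1 k u) / \<rho>"
      using that by (simp add: norm_mult norm_divide)
    also have "\<dots> \<le> B / \<rho>" using le[OF u] \<rho> by (intro divide_right_mono) auto
    finally show ?thesis .
  qed
  have "norm (c * contour_integral (circlepath z0 \<rho>) (\<lambda>u. taylor_coeff t1 k u / (u - z0))) \<le> B / \<rho> * (2 * pi * \<rho>)"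
  proof (rule has_contour_integral_bound_circlepath[OF _ _ \<rho> bound])
    show "((\<lambda>u. c * (taylor_coeff t1 k u / (u - z0))) has_contour_integral
        c * contour_integral (circlepath z0 \<rho>) (\<lambda>u. taylor_coeff t1 k u / (u - z0))) (circlepath z0 \<rho>)"
      by (intro has_contour_integral_lmul has_contour_integral_integral
        contour_integrable_taylor_coeff_circlepath[OF t1 \<rho> sphere])
    show "0 \<le> B / \<rho>" using bound[of "z0 + of_real \<rho>"] \<rho> by (auto intro: order_trans[OF norm_ge_zero])
  qed
  then show ?thesis using \<rho> by (simp add: mult.commute)
qed

text \<open>Cauchy's formula on a circle in \<open>Omega\<close> expands \<open>fR f z0\<close> in powers of \<open>\<tau> - t1\<close>; the linear
  coefficient is the Cauchy integral of \<open>u f(u-1,t1) = pdt f u t1\<close>.\<close>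

lemma has_vector_derivative_fR_pdt:
  assumes z0: "z0 \<in> Reg f" and t1: "t1 > 0"
  shows "((\<lambda>\<tau>. fR f z0 \<tau>) has_vector_derivative fR (pdt f) z0 t1) (at t1)"
proof -
  obtain R where R: "R > 0" "cball z0 R - {z0} \<subseteq> Omega" by (rule punctured_cball_Omega)
  define \<rho> where "\<rho> = R / 2"
  have \<rho>: "0 < \<rho>" "\<rho> < R" and sphere: "sphere z0 \<rho> \<subseteq> Omega" using R unfolding \<rho>_def by auto
  define \<delta> where "\<delta> = t1 / 2"
  have \<delta>: "0 < \<delta>" "\<delta> < t1" using t1 unfolding \<delta>_def by auto
  define A where "A k = contour_integral (circlepath z0 \<rho>) (\<lambda>u. taylor_coeff t1 k u / (u - z0))" for k
  define c where "c k = A k / (2 * of_real pi * \<i> * fact k)" for k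
  obtain M where M: "summable M" "\<And>k u \<tau>. u \<in> sphere z0 \<rho> \<Longrightarrow> \<bar>\<tau> - t1\<bar> \<le> \<delta> \<Longrightarrow>
      norm (complex_of_real ((\<tau> - t1)^k / fact k) * taylor_coeff t1 k u) \<le> M k"
    using taylor_terms_uniformly_summable[OF t1 compact_sphere sphere, of \<delta>] \<delta> by auto
  have "norm (norm (c k) * \<delta>^k) \<le> M k" for k
  proof -
    have "norm (complex_of_real (\<delta>^k / fact k) * A k) \<le> 2 * pi * M k"
      unfolding A_def using M(2)[of _ "t1 + \<delta>" k] \<delta>
      by (intro norm_contour_integral_taylor_coeff_le[OF t1 \<rho>(1) sphere]) auto
    moreover have "norm (norm (c k) * \<delta>^k) = norm (complex_of_real (\<delta>^k / fact k) * A k) / (2 * pi)"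
      using \<delta> by (simp add: c_def norm_mult norm_divide abs_mult norm_power mult.commute)
    ultimately show ?thesis by (simp add: divide_le_eq mult.commute)
  qed
  then have "summable (\<lambda>k. norm (c k) * \<delta>^k)"
    by (intro summable_comparison_test[OF _ M(1)]) auto
  moreover have "fR f z0 \<tau> = (\<Sum>k. c k * complex_of_real (\<tau> - t1)^k)" if "\<bar>\<tau> - t1\<bar> < \<delta>" for \<tau>
  proof -
    have "(\<lambda>k. complex_of_real ((\<tau> - t1)^k / fact k) * A k) sums (2 * of_real pi * \<i> * fR f z0 \<tau>)"
      using circlepath_taylor_sums[OF z0 R(2) \<rho> t1] that \<delta> unfolding A_def by auto
    from sums_divide[OF this, of "2 * of_real pi * \<i>"] show ?thesis
      by (simp add: c_def sums_iff field_simps)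
  qed
  ultimately have "((\<lambda>\<tau>. fR f z0 \<tau>) has_vector_derivative c 1) (at t1)"
    by (rule has_vector_derivative_power_series[OF \<delta>(1)])
  moreover have "A 1 = 2 * of_real pi * \<i> * fR (pdt f) z0 t1"
    unfolding A_def by (rule contour_integral_unique[OF has_contour_integral_pdt[OF z0 R(2) \<rho> t1]])
  ultimately show ?thesis by (simp add: c_def)
qed

lemma has_vector_derivative_fR:
  assumes "z \<in> Reg f" and "t > 0"
  shows "((\<lambda>\<tau>. fR f z \<tau>) has_vector_derivative z * fR f (z - 1) t) (at t)"
  using has_vector_derivative_fR_pdt[OF assms] fR_pdt_eq[OF assms] by simp

lemma continuous_on_fR:
  assumes "z \<in> Reg f" shows "continuous_on {0<..} (\<lambda>\<tau>. fR f z \<tau>)"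
proof (rule continuous_at_imp_continuous_on, rule ballI)
  fix t :: real assume "t \<in> {0<..}"
  then show "isCont (\<lambda>\<tau>. fR f z \<tau>) t"
    using has_vector_derivative_continuous[OF has_vector_derivative_fR[OF assms]] by simp
qed

lemma Reg_minus_nat: "z \<in> Reg f \<Longrightarrow> z - of_nat m \<in> Reg f"
proof (induction m)
  case (Suc m)
  then show ?case using Reg_minus_one[of "z - of_nat m"] by (simp add: algebra_simps)
qed simp

lemma fR_nat_is_polynomial:
  "of_nat n \<in> Reg f \<Longrightarrow> \<exists>p. degree p \<le> n \<and> (\<forall>t>0. fR f (of_nat n) t = poly p (of_real t))"
proof (induction n)
  case 0
  have "((\<lambda>\<tau>. fR f 0 \<tau>) has_vector_derivative poly 0 (of_real t)) (at t)" if "t > 0" for t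
    using has_vector_derivative_fR[of 0 t] 0 that by simp
  then obtain q where "pderiv q = 0" "\<And>t. t > 0 \<Longrightarrow> fR f 0 t = poly q (of_real t)"
    using poly_of_real_antiderivative by blast
  then show ?case by (auto simp: pderiv_eq_0_iff)
next
  case (Suc n)
  obtain p where p: "degree p \<le> n" "\<And>t. t > 0 \<Longrightarrow> fR f (of_nat n) t = poly p (of_real t)"
    using Suc.IH Reg_minus_one[OF Suc.prems] by auto
  have "((\<lambda>\<tau>. fR f (of_nat (Suc n)) \<tau>) has_vector_derivative
      poly (smult (of_nat (Suc n)) p) (of_real t)) (at t)" if "t > 0" for t
    using has_vector_derivative_fR[OF Suc.prems that] p(2)[OF that] by simp
  then obtain q where q: "pderiv q = smult (of_nat (Suc n)) p"
    "\<And>t. t > 0 \<Longrightarrow> fR f (of_nat (Suc n)) t = poly q (of_real t)"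
    using poly_of_real_antiderivative by blast
  have "degree q - 1 \<le> n" using degree_pderiv[of q] q(1) p(1) by (simp del: of_nat_Suc)
  then show ?case using q(2) by (intro exI[of _ q]) auto
qed

lemma negdiff_multi_fR_eq_box_integral:
  assumes s: "- s \<in> Reg f" and len: "length hs = length ks" and pos: "\<forall>h\<in>set hs. h > 0"
    and t: "t > 0"
  shows "negdiff_multi hs ks (\<lambda>\<tau>. fR f (- s) \<tau>) t = pochhammer s (sum_list ks) *
    (LINT u : PiE {..<sum_list ks} (\<lambda>k. {0 .. box_sides hs ks ! k}) | PiM {..<sum_list ks} (\<lambda>_. lborel).
       fR f (- s - of_nat (sum_list ks)) (t + (\<Sum>k<sum_list ks. u k)))"
proof -
  define G where "G m \<tau> = fR f (- s - of_nat m) \<tau>" for m \<tau>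
  have D: "(G m has_vector_derivative - (s + of_nat m) * G (Suc m) \<tau>) (at \<tau>)" if "\<tau> > 0" for m \<tau>
    using has_vector_derivative_fR[OF Reg_minus_nat[OF s] that, of m]
    by (simp add: G_def[abs_def] algebra_simps)
  have C: "continuous_on {0<..} (G m)" for m
    unfolding G_def[abs_def] by (rule continuous_on_fR[OF Reg_minus_nat[OF s]])
  have "\<forall>x\<in>set (box_sides hs ks). x \<ge> 0" using set_box_sides_subset[of hs ks] pos by force
  from PiM_box_integral_eq_nested_integral_pos[OF C this t]
  have "nested_integral (box_sides hs ks) (G (sum_list ks)) t =
    (LINT u : PiE {..<sum_list ks} (\<lambda>k. {0 .. box_sides hs ks ! k}) | PiM {..<sum_list ks} (\<lambda>_. lborel).
       G (sum_list ks) (t + (\<Sum>k<sum_list ks. u k)))"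
    by (simp add: length_box_sides[OF len])
  with negdiff_multi_nested_integral[OF D C len pos t] show ?thesis
    by (simp add: G_def[abs_def])
qed

end

lemma H_space_if_inH:
  assumes "inH S f" obtains \<phi> where "H_space S f \<phi>"
proof -
  from assms obtain \<phi> where A: "closed S" "discrete_set S" "\<forall>t>0. (\<lambda>z. f z t) holomorphic_on (- S)"
    "Reg f \<subseteq> Reg (pdt f)" "DLi \<phi>" "\<forall>s. Re s \<ge> 1 \<longrightarrow> - s \<notin> S \<and> (\<forall>t>0. f (- s) t =
       Laplace (\<lambda>u. \<phi> u * (complex_of_real u) powr (s - 1) / Gamma s) t)"
    unfolding inH_def by blast
  have "H_space S f \<phi>"
    by unfold_locales (use A in \<open>auto simp: DLi_def\<close>)
  then show ?thesis by (rule that)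
qed

theorem mainTheorem11:
  fixes S :: "complex set" and f :: "complex \<Rightarrow> real \<Rightarrow> complex"
    and s :: complex and hs :: "real list" and ks :: "nat list"
  assumes "inH S f"
    and "- s \<in> Reg f"
    and "length hs = length ks"
    and "\<forall>h\<in>set hs. h > 0"
  shows "- s - of_nat (sum_list ks) \<in> Reg f
    \<and> (\<forall>t>0. negdiff_multi hs ks (\<lambda>\<tau>. fR f (- s) \<tau>) t
          = pochhammer s (sum_list ks) *
            (LINT u : PiE {..<sum_list ks} (\<lambda>k. {0 .. box_sides hs ks ! k})
               | PiM {..<sum_list ks} (\<lambda>_. lborel).
               fR f (- s - of_nat (sum_list ks)) (t + (\<Sum>k<sum_list ks. u k))))
    \<and> (\<forall>n::nat. of_nat n \<in> Reg f \<longrightarrow>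
         (\<exists>p :: complex poly. degree p \<le> n \<and> (\<forall>t>0. fR f (of_nat n) t = poly p (of_real t))))"
proof -
  obtain \<phi> where "H_space S f \<phi>" by (rule H_space_if_inH[OF assms(1)])
  then interpret H_space S f \<phi> .
  show ?thesis
    using Reg_minus_nat[OF assms(2)] negdiff_multi_fR_eq_box_integral[OF assms(2-4)] fR_nat_is_polynomial
    by (intro conjI allI impI) auto
qed

end
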